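(* Let $b \in \{2,3,4,\ldots\}$, let $c$ be a real root of an integer (i.e. $c^j \in \mathbb{Z}$ for some integer $j \geq 1$), and let $u>1$ be a real number such that there exist integers $h \geq 1$, $\ell$, a number $\hat c$, and four Laurent polynomials $p_1,p_2,p_3,p_4$ in a variable $x$ with integer coefficients and only finitely many nonzero coefficients, satisfying: \begin{enumerate} \item $p_1(u) = \sum_{k \in \mathbb Z} b_k u^k = 1/b$; \item $p_2(u) = \sum_{k \in \mathbb Z} c_k u^k = c$; \item $p_3(u) = \sum_{k=0,-1,\ldots,-h+1} d_k u^k = 0$ with $d_0=1$; \item $p_4(u) = \sum_{k \in \mathbb Z} e_k u^k = 0$ with $e_\ell > \sum_{k \neq \ell} |e_k|$. \end{enumerate} Assume furthermore that $\hat c > 3|e_\ell|$ and that for every Laurent polynomial $p = \sum_{k=-m}^{n} a_k x^k$ with integer coefficients satisfying $|a_k| \leq 3|e_\ell|$ for all $k$, the following algorithm $C$ satisfies the termination condition below. Algorithm $C$: set $k = n+h$ (with $a_{k'}=0$ for $k'>n$ and $k'<-m$); while $k > -m$ and $|a_{k'}| \leq \hat c$ for all $k' \in \{k,k-1,\ldots,k-h+1\}$, replace $p$ by $p - a_k \cdot p_3(x)\cdot x^k$ (updating the coefficients $a_{k'}$ of $p$ accordingly) and then set $k=k-1$. Termination condition: whenever $C$ stops at some $k > -m$ with some $|a_{k'}| > \hat c$ for some $k' \in \{k,\ldots,k-h+1\}$, then $$\Big|\sum_{k'=k,k-1,\ldots,k-h+1} u^{k'} a_{k'}\Big| > \frac{u^{k-h}}{1-u^{-1}}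 \cdot 3|e_\ell|.$$ Then, with $$S = \Big\{\sum_{k=-m}^{n} a_k u^k : m,n \in \mathbb N,\ a_k \in \mathbb Z,\ |a_k| < |e_\ell|\Big\}$$ (each element given as the word $k \mapsto a_k$ on $\{-m,\ldots,n\}$ and interpreted as the real number $\sum_k a_k u^k$), every member of $\mathbb{D}_b[c]$ is represented by some element of $S$, and the structure $(S,+,<,=;\cdot)$ has automatic addition and automatic comparisons $<,=$ and semiautomatic multiplication. Moreover, it is a dense subset of the reals and so forms a semiautomatic grid.
   Context: $\mathbb{D}_b = \{n/b^m : n,m \in \mathbb Z\}$ and $\mathbb{D}_b[c]$ is the subring of $\mathbb R$ generated by $\mathbb D_b$ and $c$. Words are functions from a finite subset (here an interval) of $\mathbb Z$ to a finite alphabet $\Sigma$. The convolution of words $w_1,\ldots,w_r$ is the word on $\bigcup_i dom(w_i)$ whose symbol at position $h$ is the tuple $(w_1'(h),\ldots,w_r'(h))$, where $w_i'(h)=w_i(h)$ if defined and $w_i'(h)=\#$ (a new padding symbol) otherwise. A relation $R$ on represented elements is automatic iff the set of convolutions of tuples of words whose represented values are in $R$ is regular (recognised by a finite automaton); a function $f$ is automatic iff the set of convolutions of $(x_1,\ldots,x_r,y)$ with $f(x_1,\ldots,x_r)=y$ (on represented values) is regular. A binary function such as multiplication is semiautomatic iff for every fixed value of one argument, the resulting unary function of the other argument is automatic. In the structure $(S,+,<,=;\cdot)$, the operations before the semicolon are required to be automatic and those after the semicolon only semiautomatic. A semiautomatic grid is such a semiautomatic ring $(A,+,=,<;\cdot)$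 whose elements represent real numbers forming a dense subring of $\mathbb R$. *)

theory Defs
  imports Complex_Main
begin

type_synonym 'b word = "int \<Rightarrow> 'b option"

definition wdom :: "'b word \<Rightarrow> int set" where
  "wdom w = {k. w k \<noteq> None}"

definition is_word :: "'b word \<Rightarrow> bool" where
  "is_word w \<longleftrightarrow> finite (wdom w)"

text \<open>Convolution of a list of words; the padding symbol # is None.\<close>
definition conv :: "'b word list \<Rightarrow> ('b option list) word" where
  "conv ws = (\<lambda>h. if (\<exists>w\<in>set ws. w h \<noteq> None) then Some (map (\<lambda>w. w h) ws) else None)"

text \<open>String encoding used to feed a word to a finite automaton: the positions from
  max(dom \<union> {0}) down to min(dom \<union> {0}), each symbol (None for undefined) tagged
  with a flag marking position 0.\<close>
definition wlo :: "'b word \<Rightarrow> int" where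
  "wlo w = Min (wdom w \<union> {0})"

definition whi :: "'b word \<Rightarrow> int" where
  "whi w = Max (wdom w \<union> {0})"

definition enc :: "'b word \<Rightarrow> ('b option \<times> bool) list" where
  "enc w = map (\<lambda>k. (w k, k = 0)) (rev [wlo w..whi w])"

definition regular_lang :: "'c list set \<Rightarrow> bool" where
  "regular_lang L \<longleftrightarrow> (\<exists>(Q::nat set) q0 (\<delta>::nat \<Rightarrow> 'c \<Rightarrow> nat) F.
      finite Q \<and> q0 \<in> Q \<and> (\<forall>q\<in>Q. \<forall>a. \<delta> q a \<in> Q) \<and> F \<subseteq> Q \<and>
      L = {xs. foldl \<delta> q0 xs \<in> F})"

definition regular_words :: "'b word set \<Rightarrow> bool" where
  "regular_words L \<longleftrightarrow> (\<forall>w\<in>L. is_word w) \<and> regular_lang (enc ` L)"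

definition automatic_relation ::
  "'b word set \<Rightarrow> ('b word \<Rightarrow> real) \<Rightarrow> nat \<Rightarrow> (real list \<Rightarrow> bool) \<Rightarrow> bool" where
  "automatic_relation S v r R \<longleftrightarrow>
     regular_words {conv ws | ws. length ws = r \<and> set ws \<subseteq> S \<and> R (map v ws)}"

definition automatic_function ::
  "'b word set \<Rightarrow> ('b word \<Rightarrow> real) \<Rightarrow> nat \<Rightarrow> (real list \<Rightarrow> real) \<Rightarrow> bool" where
  "automatic_function S v r f \<longleftrightarrow>
     automatic_relation S v (Suc r) (\<lambda>xs. f (take r xs) = xs ! r)"

definition semiautomatic_binop ::
  "'b word set \<Rightarrow> ('b word \<Rightarrow> real) \<Rightarrow> (real \<Rightarrow> real \<Rightarrow> real) \<Rightarrow> bool" where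
  "semiautomatic_binop S v f \<longleftrightarrow>
     (\<forall>a\<in>S. automatic_function S v 1 (\<lambda>xs. f (v a) (xs ! 0))) \<and>
     (\<forall>a\<in>S. automatic_function S v 1 (\<lambda>xs. f (xs ! 0) (v a)))"

definition real_subring :: "real set \<Rightarrow> bool" where
  "real_subring R \<longleftrightarrow> 1 \<in> R \<and> (\<forall>x\<in>R. -x \<in> R) \<and> (\<forall>x\<in>R. \<forall>y\<in>R. x + y \<in> R \<and> x * y \<in> R)"

definition dense_in_reals :: "real set \<Rightarrow> bool" where
  "dense_in_reals V \<longleftrightarrow> (\<forall>x y. x < y \<longrightarrow> (\<exists>z\<in>V. x < z \<and> z < y))"

definition semiautomatic_ring_structure :: "'b word set \<Rightarrow> ('b word \<Rightarrow> real) \<Rightarrow> bool" where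
  "semiautomatic_ring_structure S v \<longleftrightarrow>
     automatic_function S v 2 (\<lambda>xs. xs ! 0 + xs ! 1) \<and>
     automatic_relation S v 2 (\<lambda>xs. xs ! 0 < xs ! 1) \<and>
     automatic_relation S v 2 (\<lambda>xs. xs ! 0 = xs ! 1) \<and>
     semiautomatic_binop S v (*)"

definition semiautomatic_grid :: "'b word set \<Rightarrow> ('b word \<Rightarrow> real) \<Rightarrow> bool" where
  "semiautomatic_grid S v \<longleftrightarrow> semiautomatic_ring_structure S v \<and>
     real_subring (v ` S) \<and> dense_in_reals (v ` S)"

definition Dyadic :: "int \<Rightarrow> real set" where
  "Dyadic b = {of_int n / (of_int b) powi m | n m :: int. True}"

definition Dyadic_ext :: "int \<Rightarrow> real \<Rightarrow> real set" where
  "Dyadic_ext b c = \<Inter> {R. real_subring R \<and> Dyadic b \<subseteq> R \<and> c \<in> R}"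

definition laurent_poly :: "(int \<Rightarrow> int) \<Rightarrow> bool" where
  "laurent_poly p \<longleftrightarrow> finite {k. p k \<noteq> 0}"

definition lp_eval :: "(int \<Rightarrow> int) \<Rightarrow> real \<Rightarrow> real" where
  "lp_eval p u = (\<Sum>k\<in>{k. p k \<noteq> 0}. of_int (p k) * u powi k)"

definition val_u :: "real \<Rightarrow> int word \<Rightarrow> real" where
  "val_u u w = (\<Sum>k\<in>wdom w. of_int (the (w k)) * u powi k)"

definition digit_words :: "int \<Rightarrow> int word set" where
  "digit_words E = {w. \<exists>(m::nat) (n::nat) (a::int \<Rightarrow> int). (\<forall>k. \<bar>a k\<bar> < E) \<and>
       w = (\<lambda>k. if - int m \<le> k \<and> k \<le> int n then Some (a k) else None)}"

text \<open>State (a,k): coefficient function a, current index k. One loop iteration replaces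
  p by p - a_k * p3(x) * x^k and decrements k.\<close>
definition algC_step :: "(int \<Rightarrow> int) \<Rightarrow> (int \<Rightarrow> int) \<times> int \<Rightarrow> (int \<Rightarrow> int) \<times> int" where
  "algC_step d s = (let a = fst s; k = snd s in (\<lambda>k'. a k' - a k * d (k' - k), k - 1))"

definition algC_guard :: "real \<Rightarrow> int \<Rightarrow> int \<Rightarrow> (int \<Rightarrow> int) \<times> int \<Rightarrow> bool" where
  "algC_guard chat m h s \<longleftrightarrow> snd s > - m \<and>
     (\<forall>k'\<in>{snd s - h + 1 .. snd s}. of_int \<bar>fst s k'\<bar> \<le> chat)"

definition algC_condition :: "(int \<Rightarrow> int) \<Rightarrow> int \<Rightarrow> real \<Rightarrow> real \<Rightarrow> int \<Rightarrow> bool" where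
  "algC_condition d h chat u E \<longleftrightarrow>
    (\<forall>(m::int) (n::int) (a::int \<Rightarrow> int).
       (\<forall>k. (k < - m \<or> n < k) \<longrightarrow> a k = 0) \<and> (\<forall>k. \<bar>a k\<bar> \<le> 3 * E) \<longrightarrow>
       (\<forall>i::nat.
          let s = (algC_step d ^^ i) (a, n + h); a' = fst s; k = snd s in
          (\<forall>j<i. algC_guard chat m h ((algC_step d ^^ j) (a, n + h))) \<and>
          k > - m \<and> (\<exists>k'\<in>{k - h + 1 .. k}. chat < of_int \<bar>a' k'\<bar>) \<longrightarrow>
          \<bar>\<Sum>k'\<in>{k - h + 1 .. k}. u powi k' * of_int (a' k')\<bar>
             > u powi (k - h) / (1 - u powi (-1)) * (3 * of_int E)))"

end

theory Submission
  imports Defs "HOL-Library.FuncSet"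
begin

text \<open>The values of the digit words form the ring \<open>\<int>[u, 1/u]\<close>: in an integer Laurent
  polynomial evaluated at \<open>u\<close>, a digit of size at least \<open>E = e\<^sub>l\<close> can be reduced by subtracting
  a shifted multiple of \<open>p4\<close>, which vanishes at \<open>u\<close>, and since \<open>e\<^sub>l\<close> dominates the other
  coefficients this strictly decreases the sum of the absolute values of the digits. This ring
  contains \<open>1/b\<close> and \<open>c\<close>, hence \<open>\<int>[1/b, c]\<close>, and it is dense because it contains \<open>\<int>[1/b]\<close>.

  Addition, comparison, equality and multiplication by a fixed value all compare a linear form
  \<open>\<Sum>i. \<lambda>\<^sub>i * v(w\<^sub>i)\<close> with 0, where the \<open>\<lambda>\<^sub>i\<close> lie in \<open>\<int>[u, 1/u]\<close>. An automaton reads the convolution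
  from the highest position and keeps the Horner value of the linear form; once this value
  leaves a suitable interval \<open>[-B, B]\<close> its sign is decided. Inside \<open>[-B, B]\<close> only finitely
  many values occur: such a Horner value splits into a bounded number of Horner values with
  digits at most \<open>3 * E\<close> whose prefixes stay below \<open>3 * E / (u - 1)\<close>, and by the termination
  condition of algorithm C each of these is the value of a window of \<open>h\<close> digits bounded
  by \<open>chat\<close>.\<close>

section \<open>Horner values and algorithm C\<close>

primrec horner :: "real \<Rightarrow> (nat \<Rightarrow> real) \<Rightarrow> nat \<Rightarrow> real" where
  "horner u d 0 = 0"
| "horner u d (Suc n) = u * horner u d n + d n"

lemma horner_cong: "(\<And>i. i < n \<Longrightarrow> d i = d' i) \<Longrightarrow> horner u d n = horner u d' n"
  by (induction n) auto

lemma horner_sum: "horner u (\<lambda>i. \<Sum>t\<in>T. f t i) n = (\<Sum>t\<in>T. horner u (f t) n)"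
  by (induction n) (auto simp: sum.distrib sum_distrib_left)

lemma horner_mult: "horner u (\<lambda>i. c * d i) n = c * horner u d n"
  by (induction n) (auto simp: algebra_simps)

lemma sum_powi_eq_horner:
  assumes "u \<noteq> 0"
  shows "(\<Sum>i<n. d i * u powi (- int i)) = u powi (1 - int n) * horner u d n"
proof (induction n)
  case 0
  then show ?case by simp
next
  case (Suc n)
  have "u powi (1 - int n) = u powi (- int n) * u"
    using power_int_add_1[of u "- int n"] assms by simp
  then show ?case
    using Suc by (simp add: algebra_simps)
qed

lemma sum_int_interval_eq_sum_lessThan:
  assumes "h \<ge> 1"
  shows "(\<Sum>k'\<in>{k - h + 1 .. k}. f k') = (\<Sum>j<nat h. f (k - int j))"
proof -
  have "bij_betw (\<lambda>j. k - int j) {..<nat h} {k - h + 1 .. k}"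
  proof (rule bij_betwI')
    fix y assume "y \<in> {k - h + 1..k}"
    then show "\<exists>x\<in>{..<nat h}. y = k - int x"
      using assms by (intro bexI[of _ "nat (k - y)"]) auto
  qed (use assms in auto)
  then show ?thesis by (metis sum.reindex_bij_betw)
qed

lemma rounding_with_sum:
  fixes x :: "nat \<Rightarrow> real"
  assumes "(\<Sum>t<T. x t) = of_int N"
  obtains y :: "nat \<Rightarrow> int" where "(\<Sum>t<T. y t) = N" and "\<forall>t<T. \<bar>of_int (y t) - x t\<bar> < 1"
proof
  define S where "S t = (\<Sum>s<t. x s)" for t
  define y where "y t = \<lfloor>S (Suc t)\<rfloor> - \<lfloor>S t\<rfloor>" for t
  have "(\<Sum>t<T. y t) = \<lfloor>S T\<rfloor> - \<lfloor>S 0\<rfloor>"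
    unfolding y_def by (rule sum_lessThan_telescope)
  then show "(\<Sum>t<T. y t) = N"
    using assms by (simp add: S_def)
  have "\<bar>of_int (y t) - x t\<bar> < 1" for t
  proof -
    have "S (Suc t) = S t + x t" by (simp add: S_def)
    moreover have "of_int \<lfloor>S (Suc t)\<rfloor> \<le> S (Suc t)" "S (Suc t) < of_int \<lfloor>S (Suc t)\<rfloor> + 1"
      "of_int \<lfloor>S t\<rfloor> \<le> S t" "S t < of_int \<lfloor>S t\<rfloor> + 1" by linarith+
    ultimately show ?thesis unfolding y_def by (simp add: abs_less_iff) linarith
  qed
  then show "\<forall>t<T. \<bar>of_int (y t) - x t\<bar> < 1" by blast
qed

lemma rounded_digit_bound:
  fixes u B P P' c y :: real and T :: nat
  assumes "u > 0" "T > 0" "\<bar>P\<bar> \<le> B" "\<bar>P'\<bar> \<le> B" "\<bar>c - P / T\<bar> < 1"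
    and "\<bar>y - (P' / T - u * c)\<bar> < 1"
  shows "\<bar>y\<bar> < 1 + u + (1 + u) * (B / T)"
proof -
  have "\<bar>P / T\<bar> \<le> B / T" "\<bar>P' / T\<bar> \<le> B / T"
    using assms(2-4) by (simp_all add: divide_right_mono)
  then have "\<bar>c\<bar> \<le> B / T + 1" using assms(5) by linarith
  then have "\<bar>u * c\<bar> \<le> u * (B / T + 1)" using assms(1) by (simp add: abs_mult mult_left_mono)
  then have "\<bar>P' / T - u * c\<bar> \<le> B / T + u * (B / T + 1)"
    using \<open>\<bar>P' / T\<bar> \<le> B / T\<close> abs_triangle_ineq4[of "P' / T" "u * c"] by linarith
  moreover have "B / T + u * (B / T + 1) = u + (1 + u) * (B / T)" by (simp add: algebra_simps add_divide_distrib)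
  ultimately show ?thesis using assms(6) abs_triangle_ineq2[of y "P' / T - u * c"] by linarith
qed

text \<open>The Laurent polynomial with coefficients \<open>z 0, ..., z (n - 1)\<close> at \<open>x ^ 0, ..., x ^ (1 - n)\<close>;
  running algorithm C on it produces the Horner prefixes of \<open>z\<close> (\<open>algC_run_horner\<close>).\<close>

definition laurent_of_digits :: "nat \<Rightarrow> (nat \<Rightarrow> int) \<Rightarrow> int \<Rightarrow> int" where
  "laurent_of_digits n z k = (if - int n < k \<and> k \<le> 0 then z (nat (- k)) else 0)"

text \<open>\<open>E\<close> plays the role of \<open>\<bar>e\<^sub>l\<bar>\<close>; the hypothesis \<open>u + 1 < 3 * E\<close> follows from the dominance of
  \<open>e\<^sub>l\<close> in \<open>p4\<close> (\<open>dominant_coeff_bound\<close>).\<close>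

locale algC_setting =
  fixes u chat :: real and h E :: int and p3 :: "int \<Rightarrow> int"
  assumes u: "u > 1" and h: "h \<ge> 1"
    and u_less_3E: "u + 1 < 3 * of_int E"
    and p3_supp: "\<forall>k. (k < - h + 1 \<or> 0 < k) \<longrightarrow> p3 k = 0"
    and p3_0: "p3 0 = 1"
    and p3: "lp_eval p3 u = 0"
    and algC: "algC_condition p3 h chat u E"
begin

abbreviation "H \<equiv> nat h"

lemma u_nonzero: "u \<noteq> 0"
  using u by simp

lemma E_pos: "E > 0"
  using u u_less_3E by linarith

lemma p3_sum_zero: "(\<Sum>j<H. of_int (p3 (- int j)) * u powi (- int j)) = 0"
proof -
  have sub: "{k. p3 k \<noteq> 0} \<subseteq> (\<lambda>j. - int j) ` {..<H}"
  proof
    fix k assume "k \<in> {k. p3 k \<noteq> 0}"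
    then have "- h + 1 \<le> k" "k \<le> 0" using p3_supp by (auto simp: not_less)
    then show "k \<in> (\<lambda>j. - int j) ` {..<H}"
      by (intro image_eqI[of _ _ "nat (-k)"]) auto
  qed
  have "0 = (\<Sum>k\<in>{k. p3 k \<noteq> 0}. of_int (p3 k) * u powi k)"
    using p3 by (simp add: lp_eval_def)
  also have "\<dots> = (\<Sum>k\<in>(\<lambda>j. - int j) ` {..<H}. of_int (p3 k) * u powi k)"
    by (rule sum.mono_neutral_left) (use sub in auto)
  also have "\<dots> = (\<Sum>j<H. of_int (p3 (- int j)) * u powi (- int j))"
    by (subst sum.reindex) (auto simp: inj_on_def)
  finally show ?thesis by simp
qed

definition window_value :: "(int \<Rightarrow> int) \<times> int \<Rightarrow> real" where
  "window_value s = (\<Sum>j<H. u powi (snd s - int j) * of_int (fst s (snd s - int j)))"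

lemma algC_run_index: "snd ((algC_step p3 ^^ i) (a, h)) = h - int i"
  by (induction i) (auto simp: algC_step_def Let_def)

lemma algC_run_low: "k \<le> - int i \<Longrightarrow> fst ((algC_step p3 ^^ i) (a, h)) k = a k"
proof (induction i arbitrary: k)
  case 0
  then show ?case by simp
next
  case (Suc i)
  obtain A k0 where s: "(algC_step p3 ^^ i) (a, h) = (A, k0)" by (metis prod.collapse)
  have "k0 = h - int i" using algC_run_index[of i a] s by simp
  then have "p3 (k - k0) = 0" using p3_supp Suc.prems by auto
  moreover have "A k = a k" using Suc s by auto
  moreover have "(algC_step p3 ^^ Suc i) (a, h) = (\<lambda>k'. A k' - A k0 * p3 (k' - k0), k0 - 1)"
    using s by (simp add: algC_step_def Let_def)
  ultimately show ?case by simp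
qed

text \<open>A step of algorithm C subtracts a multiple of \<open>x ^ k * p3\<close>, which vanishes at \<open>u\<close>,
  and clears the coefficient at \<open>k\<close>; so the window only gains the coefficient at \<open>k - h\<close>.\<close>

lemma window_value_algC_step:
  "window_value (algC_step p3 (A, k)) = window_value (A, k) + u powi (k - h) * of_int (A (k - h))"
proof -
  define g where "g j = u powi (k - int j) * of_int (A (k - int j))" for j
  define q where "q j = u powi (- int j) * of_int (p3 (- int j))" for j
  have gs: "(\<Sum>j<H. g (Suc j)) = (\<Sum>j<H. g j) + g H - g 0"
    using sum.lessThan_Suc_shift[of g H] sum.lessThan_Suc[of g H] by simp
  have qs: "(\<Sum>j<H. q (Suc j)) = (\<Sum>j<H. q j) + q H - q 0"
    using sum.lessThan_Suc_shift[of q H] sum.lessThan_Suc[of q H] by simp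
  have q_sum: "(\<Sum>j<H. q j) = 0" using p3_sum_zero by (simp add: q_def mult.commute)
  have qH: "q H = 0" using p3_supp h by (simp add: q_def)
  have q0: "q 0 = 1" using p3_0 by (simp add: q_def)
  have gH: "g H = u powi (k - h) * of_int (A (k - h))" using h by (simp add: g_def)
  have shifted: "u powi (k - 1 - int j) * of_int (A (k - 1 - int j) - A k * p3 (k - 1 - int j - k))
      = g (Suc j) - of_int (A k) * u powi k * q (Suc j)" for j
  proof -
    have e1: "k - 1 - int j = k - int (Suc j)" and e2: "k - int (Suc j) - k = - int (Suc j)" by simp_all
    have "u powi (k - int (Suc j)) = u powi k * u powi (- int (Suc j))"
      using power_int_add[OF disjI1[OF u_nonzero], of k "- int (Suc j)"]
      by (simp only: diff_conv_add_uminus)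
    then show ?thesis unfolding e1 e2 g_def q_def by (simp add: algebra_simps)
  qed
  have "window_value (algC_step p3 (A, k)) = (\<Sum>j<H. g (Suc j) - of_int (A k) * u powi k * q (Suc j))"
    unfolding window_value_def algC_step_def Let_def fst_conv snd_conv
    by (intro sum.cong refl) (rule shifted)
  also have "\<dots> = (\<Sum>j<H. g (Suc j)) - of_int (A k) * u powi k * (\<Sum>j<H. q (Suc j))"
    by (simp add: sum_subtractf sum_distrib_left)
  also have "\<dots> = window_value (A, k) + u powi (k - h) * of_int (A (k - h))"
    unfolding gs qs q_sum qH q0 gH by (simp add: g_def window_value_def)
  finally show ?thesis .
qed

lemma algC_run_window_value:
  "window_value ((algC_step p3 ^^ i) (a, h)) =
     window_value (a, h) + (\<Sum>i'<i. of_int (a (- int i')) * u powi (- int i'))"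
proof (induction i)
  case 0
  then show ?case by simp
next
  case (Suc i)
  obtain A k where s: "(algC_step p3 ^^ i) (a, h) = (A, k)" by (metis prod.collapse)
  have "k - h = - int i" using algC_run_index[of i a] s by simp
  moreover have "A (- int i) = a (- int i)" using algC_run_low[of "- int i" i a] s by simp
  ultimately show ?case
    using Suc s window_value_algC_step[of A k] by simp
qed

definition carry_bound :: real where
  "carry_bound = 3 * of_int E / (u - 1)"

definition window_values :: "real set" where
  "window_values = (\<lambda>w. \<Sum>j<H. of_int (w j) * u powi (h - 1 - int j)) `
     (PiE {..<H} (\<lambda>_. {-\<lfloor>chat\<rfloor>..\<lfloor>chat\<rfloor>}))"

lemma finite_window_values: "finite window_values"
  unfolding window_values_def by (intro finite_imageI finite_PiE) auto

lemma algC_run_horner: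
  assumes "i \<le> n"
  shows "window_value ((algC_step p3 ^^ i) (laurent_of_digits n z, h)) =
    u powi (1 - int i) * horner u (\<lambda>i. of_int (z i)) i"
proof -
  have "window_value (laurent_of_digits n z, h) = 0"
    unfolding window_value_def laurent_of_digits_def using h by (auto intro!: sum.neutral)
  then have "window_value ((algC_step p3 ^^ i) (laurent_of_digits n z, h)) =
      (\<Sum>i'<i. of_int (laurent_of_digits n z (- int i')) * u powi (- int i'))"
    using algC_run_window_value by simp
  also have "\<dots> = (\<Sum>i'<i. of_int (z i') * u powi (- int i'))"
    using assms by (intro sum.cong) (auto simp: laurent_of_digits_def)
  also have "\<dots> = u powi (1 - int i) * horner u (\<lambda>i. of_int (z i)) i"
    by (rule sum_powi_eq_horner[OF u_nonzero])
  finally show ?thesis .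
qed

text \<open>If the guard failed at step \<open>i\<close>, the termination condition of algorithm C would
  force the \<open>i\<close>-th Horner prefix above \<open>carry_bound\<close>.\<close>

lemma algC_guard_run:
  assumes z: "\<forall>i<n. \<bar>z i\<bar> \<le> 3 * E"
    and prefixes: "\<forall>n'\<le>n. \<bar>horner u (\<lambda>i. of_int (z i)) n'\<bar> \<le> carry_bound"
    and "i \<le> n"
  shows "algC_guard chat (int n + h) h ((algC_step p3 ^^ i) (laurent_of_digits n z, h))"
  using \<open>i \<le> n\<close>
proof (induction i rule: less_induct)
  case (less i)
  define a where "a = laurent_of_digits n z"
  define s where "s = (algC_step p3 ^^ i) (a, h)"
  have s_index: "snd s = h - int i" unfolding s_def by (rule algC_run_index)
  have "snd s > - (int n + h)" using less.prems h s_index by simp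
  show ?case
  proof (rule ccontr)
    assume "\<not> ?case"
    then obtain k' where "k' \<in> {snd s - h + 1..snd s}" "chat < of_int \<bar>fst s k'\<bar>"
      using \<open>snd s > - (int n + h)\<close> unfolding algC_guard_def s_def a_def by (auto simp: not_le)
    moreover have "\<forall>k. (k < - (int n + h) \<or> 0 < k) \<longrightarrow> a k = 0" "\<forall>k. \<bar>a k\<bar> \<le> 3 * E"
      using h z E_pos unfolding a_def laurent_of_digits_def by auto
    ultimately have "\<bar>\<Sum>k'\<in>{snd s - h + 1..snd s}. u powi k' * of_int (fst s k')\<bar>
        > u powi (snd s - h) / (1 - u powi (-1)) * (3 * of_int E)"
      using algC[unfolded algC_condition_def, rule_format, of "int n + h" 0 a i] less
        \<open>snd s > - (int n + h)\<close> unfolding s_def a_def by (auto simp: Let_def)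
    moreover have "(\<Sum>k'\<in>{snd s - h + 1..snd s}. u powi k' * of_int (fst s k')) = window_value s"
      unfolding window_value_def by (rule sum_int_interval_eq_sum_lessThan[OF h])
    moreover have "u powi (snd s - h) / (1 - u powi (-1)) * (3 * of_int E) =
        u powi (1 - int i) * carry_bound"
    proof -
      have sh: "snd s - h = - int i" using s_index by simp
      have pw: "u powi (1 - int i) = u powi (- int i) * u"
        using power_int_add_1[of u "- int i"] u_nonzero by simp
      have d: "1 - u powi (-1) = (u - 1) / u"
        using u_nonzero by (simp add: power_int_minus field_simps)
      have "u - 1 \<noteq> 0" using u by simp
      then show ?thesis
        unfolding sh pw d carry_bound_def using u_nonzero by (simp add: field_simps)
    qed
    ultimately have "u powi (1 - int i) * carry_bound <
        \<bar>u powi (1 - int i) * horner u (\<lambda>i. of_int (z i)) i\<bar>"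
      using algC_run_horner[OF less.prems] unfolding s_def a_def by simp
    then have "\<bar>horner u (\<lambda>i. of_int (z i)) i\<bar> > carry_bound"
      using u by (simp add: abs_mult)
    then show False using prefixes less.prems by force
  qed
qed

lemma horner_in_window_values:
  assumes z: "\<forall>i<n. \<bar>z i\<bar> \<le> 3 * E"
    and prefixes: "\<forall>n'\<le>n. \<bar>horner u (\<lambda>i. of_int (z i)) n'\<bar> \<le> carry_bound"
  shows "horner u (\<lambda>i. of_int (z i)) n \<in> window_values"
proof -
  define A where "A = fst ((algC_step p3 ^^ n) (laurent_of_digits n z, h))"
  have index: "snd ((algC_step p3 ^^ n) (laurent_of_digits n z, h)) = h - int n"
    by (rule algC_run_index)
  have A_bound: "\<bar>A k'\<bar> \<le> \<lfloor>chat\<rfloor>" if "k' \<in> {h - int n - h + 1 .. h - int n}" for k'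
    using algC_guard_run[OF z prefixes order.refl] that index
    unfolding algC_guard_def A_def by (auto simp: le_floor_iff)
  define w where "w = restrict (\<lambda>j. A (h - int n - int j)) {..<H}"
  have w: "w \<in> PiE {..<H} (\<lambda>_. {-\<lfloor>chat\<rfloor>..\<lfloor>chat\<rfloor>})"
  proof (rule PiE_I)
    fix j assume j: "j \<in> {..<H}"
    then have "h - int n - int j \<in> {h - int n - h + 1 .. h - int n}" using h by auto
    from A_bound[OF this] show "w j \<in> {-\<lfloor>chat\<rfloor>..\<lfloor>chat\<rfloor>}"
      using j unfolding w_def by (auto simp: abs_le_iff)
  qed (simp add: w_def)
  have "horner u (\<lambda>i. of_int (z i)) n =
      u powi (int n - 1) * window_value ((algC_step p3 ^^ n) (laurent_of_digits n z, h))"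
    using algC_run_horner[of n n z] u_nonzero
    by (simp add: power_int_minus[symmetric] power_int_add[symmetric])
  also have "\<dots> = (\<Sum>j<H. of_int (w j) * u powi (h - 1 - int j))"
    unfolding window_value_def index sum_distrib_left A_def[symmetric]
  proof (intro sum.cong refl)
    fix j assume "j \<in> {..<H}"
    have ex: "(int n - 1) + (h - int n - int j) = h - 1 - int j" by simp
    have "u powi (int n - 1) * u powi (h - int n - int j) = u powi (h - 1 - int j)"
      using power_int_add[OF disjI1[OF u_nonzero], of "int n - 1" "h - int n - int j"]
      unfolding ex by simp
    then show "u powi (int n - 1) * (u powi (h - int n - int j) * of_int (A (h - int n - int j))) =
      of_int (w j) * u powi (h - 1 - int j)"
      using \<open>j \<in> {..<H}\<close> by (simp add: w_def algebra_simps)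
  qed
  finally show ?thesis unfolding window_values_def using w by blast
qed

lemma horner_split:
  fixes z :: "nat \<Rightarrow> int" and T :: nat
  assumes T: "T \<ge> 1" and BT: "(1 + u) * (B / real T) \<le> 3 * of_int E - 1 - u"
    and prefixes: "\<forall>n'\<le>n. \<bar>horner u (\<lambda>i. of_int (z i)) n'\<bar> \<le> B"
  shows "\<exists>Z. (\<forall>i<n. (\<Sum>t<T. Z t i) = z i) \<and> (\<forall>t<T. \<forall>i<n. \<bar>Z t i\<bar> \<le> 3 * E) \<and>
    (\<forall>t<T. \<forall>n'\<le>n. \<bar>horner u (\<lambda>i. of_int (Z t i)) n' - horner u (\<lambda>i. of_int (z i)) n' / real T\<bar> < 1)"
  using prefixes
proof (induction n)
  case 0
  show ?case by (intro exI[of _ "\<lambda>_ _. 0"]) simp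
next
  case (Suc n)
  let ?c = "\<lambda>z n. horner u (\<lambda>i. of_int (z i)) n"
  obtain Z where Z_sum: "\<forall>i<n. (\<Sum>t<T. Z t i) = z i" and Z_digits: "\<forall>t<T. \<forall>i<n. \<bar>Z t i\<bar> \<le> 3 * E"
    and Z_close: "\<forall>t<T. \<forall>n'\<le>n. \<bar>?c (Z t) n' - ?c z n' / real T\<bar> < 1"
    using Suc by auto
  have Tpos: "real T > 0" using T by simp
  define P where "P = ?c z n"
  have P: "\<bar>P\<bar> \<le> B" "\<bar>u * P + of_int (z n)\<bar> \<le> B"
    using Suc.prems unfolding P_def by (metis horner.simps(2) le_SucI order.refl)+
  have "(\<Sum>t<T. ?c (Z t) n) = horner u (\<lambda>i. \<Sum>t<T. of_int (Z t i)) n"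
    by (rule horner_sum[symmetric])
  also have "\<dots> = P" unfolding P_def by (rule horner_cong) (metis Z_sum of_int_sum)
  finally have Z_sum_horner: "(\<Sum>t<T. ?c (Z t) n) = P" .
  define x where "x t = (u * P + of_int (z n)) / real T - u * ?c (Z t) n" for t
  have "(\<Sum>t<T. x t) = of_int (z n)"
    unfolding x_def using Tpos by (simp add: sum_subtractf sum_distrib_left[symmetric] Z_sum_horner)
  then obtain y where y_sum: "(\<Sum>t<T. y t) = z n" and y_close: "\<forall>t<T. \<bar>of_int (y t) - x t\<bar> < 1"
    using rounding_with_sum by blast
  have y_digit: "\<bar>y t\<bar> \<le> 3 * E" if t: "t < T" for t
  proof -
    have "\<bar>of_int (y t)\<bar> < 1 + u + (1 + u) * (B / real T)"
      using rounded_digit_bound[of u T P B "u * P + of_int (z n)" "?c (Z t) n" "of_int (y t)"]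
        u Tpos P Z_close y_close t unfolding x_def P_def by auto
    then show ?thesis using BT by linarith
  qed
  define Z' where "Z' t = (Z t)(n := y t)" for t
  have Z'_prefix: "?c (Z' t) n' = ?c (Z t) n'" if "n' \<le> n" for t n'
    by (rule horner_cong) (use that in \<open>auto simp: Z'_def\<close>)
  show ?case
  proof (intro exI[of _ Z'] conjI allI impI)
    fix i assume "i < Suc n"
    then show "(\<Sum>t<T. Z' t i) = z i" using Z_sum y_sum by (cases "i = n") (auto simp: Z'_def)
  next
    fix t i assume "t < T" "i < Suc n"
    then show "\<bar>Z' t i\<bar> \<le> 3 * E" using Z_digits y_digit by (cases "i = n") (auto simp: Z'_def)
  next
    fix t n' assume t: "t < T" and n': "n' \<le> Suc n"
    have "?c (Z' t) (Suc n) - ?c z (Suc n) / real T = of_int (y t) - x t"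
      using Z'_prefix[of n t] by (simp add: Z'_def x_def P_def)
    then show "\<bar>?c (Z' t) n' - ?c z n' / real T\<bar> < 1"
      using Z_close y_close t n' Z'_prefix by (cases "n' = Suc n") auto
  qed
qed

definition bounded_horner_values :: "real \<Rightarrow> real set" where
  "bounded_horner_values B = {horner u (\<lambda>i. of_int (z i)) n | z n.
     \<forall>n'\<le>n. \<bar>horner u (\<lambda>i. of_int (z i)) n'\<bar> \<le> B}"

lemma split_count_exists:
  obtains T :: nat where "T \<ge> 1" "B / real T \<le> carry_bound - 1"
    and "(1 + u) * (B / real T) \<le> 3 * of_int E - 1 - u"
proof
  have "carry_bound > 1" unfolding carry_bound_def using u u_less_3E by (simp add: field_simps)
  define \<delta> where "\<delta> = min (carry_bound - 1) ((3 * of_int E - 1 - u) / (1 + u))"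
  have "\<delta> > 0" unfolding \<delta>_def using \<open>carry_bound > 1\<close> u_less_3E u by (simp add: field_simps)
  define T where "T = nat \<lceil>B / \<delta>\<rceil> + 1"
  show "T \<ge> 1" unfolding T_def by simp
  have "B / \<delta> \<le> real T" unfolding T_def by linarith
  then have "B / real T \<le> \<delta>" using \<open>\<delta> > 0\<close> \<open>T \<ge> 1\<close> by (simp add: field_simps)
  then show "B / real T \<le> carry_bound - 1" "(1 + u) * (B / real T) \<le> 3 * of_int E - 1 - u"
    using u unfolding \<delta>_def by (simp_all add: field_simps)
qed

text \<open>Splitting into \<open>T\<close> summands with prefixes below \<open>carry_bound\<close> puts every element of
  \<open>bounded_horner_values B\<close> into the \<open>T\<close>-fold sums of the finite set \<open>window_values\<close>.\<close>

lemma finite_bounded_horner_values: "finite (bounded_horner_values B)"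
proof -
  let ?c = "\<lambda>z n. horner u (\<lambda>i. of_int (z i)) n"
  obtain T where T: "T \<ge> 1" "real T > 0" and BT1: "B / real T \<le> carry_bound - 1"
    and BT2: "(1 + u) * (B / real T) \<le> 3 * of_int E - 1 - u"
    using split_count_exists by (metis of_nat_0_less_iff less_le_trans zero_less_one)
  define Sums where "Sums = (\<lambda>f. \<Sum>t<T. f t) ` (PiE {..<T} (\<lambda>_. window_values))"
  have "bounded_horner_values B \<subseteq> Sums"
  proof
    fix p assume "p \<in> bounded_horner_values B"
    then obtain z n where p: "p = ?c z n" and prefixes: "\<forall>n'\<le>n. \<bar>?c z n'\<bar> \<le> B"
      unfolding bounded_horner_values_def by auto
    obtain Z where Z_sum: "\<forall>i<n. (\<Sum>t<T. Z t i) = z i" and Z_digits: "\<forall>t<T. \<forall>i<n. \<bar>Z t i\<bar> \<le> 3 * E"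
      and Z_close: "\<forall>t<T. \<forall>n'\<le>n. \<bar>?c (Z t) n' - ?c z n' / real T\<bar> < 1"
      using horner_split[OF T(1) BT2 prefixes] by blast
    have "?c (Z t) n \<in> window_values" if t: "t < T" for t
    proof (rule horner_in_window_values)
      show "\<forall>i<n. \<bar>Z t i\<bar> \<le> 3 * E" using Z_digits t by auto
      show "\<forall>n'\<le>n. \<bar>?c (Z t) n'\<bar> \<le> carry_bound"
      proof (intro allI impI)
        fix n' assume n': "n' \<le> n"
        have "\<bar>?c (Z t) n' - ?c z n' / real T\<bar> < 1" using Z_close t n' by auto
        moreover have "\<bar>?c z n' / real T\<bar> \<le> B / real T"
          using prefixes n' T by (simp add: divide_right_mono)
        ultimately show "\<bar>?c (Z t) n'\<bar> \<le> carry_bound" using BT1 by linarith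
      qed
    qed
    then have "restrict (\<lambda>t. ?c (Z t) n) {..<T} \<in> PiE {..<T} (\<lambda>_. window_values)" by auto
    moreover have "p = (\<Sum>t<T. ?c (Z t) n)"
      unfolding p horner_sum[symmetric] by (rule horner_cong) (metis Z_sum of_int_sum)
    moreover have "(\<Sum>t<T. restrict (\<lambda>t. ?c (Z t) n) {..<T} t) = (\<Sum>t<T. ?c (Z t) n)" by simp
    ultimately show "p \<in> Sums" unfolding Sums_def by (metis image_eqI)
  qed
  moreover have "finite Sums"
    unfolding Sums_def using finite_window_values by (intro finite_imageI finite_PiE) auto
  ultimately show ?thesis by (rule finite_subset)
qed

end

section \<open>Bounded Horner values with digits in \<open>\<int>[u, 1/u]\<close>\<close>

text \<open>\<open>horner_low c n e\<close> is the coefficient of \<open>u ^ e\<close>, \<open>e \<le> T\<close>, in the Horner value of the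
  digits \<open>\<Sum>j\<le>Suc T. c i j * u ^ j\<close>; everything of degree above \<open>T\<close> is carried into
  integer digits (lemma \<open>horner_poly_digits\<close>).\<close>

primrec horner_low :: "(nat \<Rightarrow> nat \<Rightarrow> int) \<Rightarrow> nat \<Rightarrow> nat \<Rightarrow> int" where
  "horner_low c 0 e = 0"
| "horner_low c (Suc n) e = (if e = 0 then 0 else horner_low c n (e - 1)) + c n e"

lemma horner_low_bound:
  assumes c: "\<forall>i j. \<bar>c i j\<bar> \<le> M"
  shows "\<bar>horner_low c n e\<bar> \<le> int (Suc e) * M"
proof (induction n arbitrary: e)
  case 0
  have "M \<ge> 0" using c by (meson abs_ge_zero order_trans)
  then show ?case by simp
next
  case (Suc n)
  have "\<bar>c n e\<bar> \<le> M" using c by auto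
  moreover have "\<bar>horner_low c n (e - 1)\<bar> \<le> int e * M" if "e > 0"
    using Suc.IH[of "e - 1"] that by simp
  ultimately show ?case
    using abs_triangle_ineq[of "horner_low c n (e - 1)" "c n e"] by (cases e) (auto simp: algebra_simps)
qed

lemma horner_poly_digits:
  fixes c :: "nat \<Rightarrow> nat \<Rightarrow> int" and u :: real and T :: nat
  shows "horner u (\<lambda>i. \<Sum>j\<le>Suc T. of_int (c i j) * u ^ j) n =
    u ^ Suc T * horner u (\<lambda>i. of_int (horner_low c i T + c i (Suc T))) n +
    (\<Sum>e\<le>T. of_int (horner_low c n e) * u ^ e)"
proof (induction n)
  case 0
  then show ?case by simp
next
  case (Suc n)
  define X where "X = horner u (\<lambda>i. of_int (horner_low c i T + c i (Suc T))) n"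
  define S1 where "S1 = (\<Sum>e\<le>T. of_int (horner_low c n e) * u ^ e)"
  define S2 where "S2 = (\<Sum>e<T. of_int (horner_low c n e) * u ^ Suc e)"
  define S3 where "S3 = (\<Sum>e\<le>T. of_int (c n e) * u ^ e)"
  have low: "(\<Sum>e\<le>T. of_int (horner_low c (Suc n) e) * u ^ e) = S3 + S2"
  proof -
    have "(\<Sum>e\<le>T. of_int (horner_low c (Suc n) e) * u ^ e) =
      S3 + (\<Sum>e\<le>T. of_int (if e = 0 then 0 else horner_low c n (e - 1)) * u ^ e)"
      unfolding S3_def by (simp add: sum.distrib[symmetric] algebra_simps)
    also have "(\<Sum>e\<le>T. of_int (if e = 0 then 0 else horner_low c n (e - 1)) * u ^ e) = S2"
      unfolding S2_def by (subst sum.atMost_shift) simp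
    finally show ?thesis .
  qed
  have "u * S1 = S2 + of_int (horner_low c n T) * u ^ Suc T"
    unfolding S1_def S2_def by (simp add: sum_distrib_left lessThan_Suc_atMost[symmetric] algebra_simps)
  moreover have "(\<Sum>j\<le>Suc T. of_int (c n j) * u ^ j) = S3 + of_int (c n (Suc T)) * u ^ Suc T"
    unfolding S3_def by simp
  ultimately show ?case
    using Suc unfolding low X_def[symmetric] S1_def[symmetric] by (simp add: X_def algebra_simps)
qed

context algC_setting
begin

definition laurent_span :: "nat \<Rightarrow> nat \<Rightarrow> real set" where
  "laurent_span s T = {u powi (- int s) * (\<Sum>j\<le>Suc T. of_int (c j) * u ^ j) | c. True}"

lemma finite_bounded_horner_poly_values:
  "finite {horner u (\<lambda>i. \<Sum>j\<le>Suc T. of_int (c i j) * u ^ j) n | c n.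
    (\<forall>i j. \<bar>c i j\<bar> \<le> M) \<and> (\<forall>n'\<le>n. \<bar>horner u (\<lambda>i. \<Sum>j\<le>Suc T. of_int (c i j) * u ^ j) n'\<bar> \<le> B)}"
    (is "finite ?S")
proof -
  define low_range where "low_range = {- (int (Suc T) * M)..int (Suc T) * M}"
  define lows where "lows = (\<lambda>\<delta>. \<Sum>e\<le>T. of_int (\<delta> e) * u ^ e) ` PiE {..T} (\<lambda>_. low_range)"
  have finite_lows: "finite lows" unfolding lows_def low_range_def by (intro finite_imageI finite_PiE) auto
  define L where "L = Max (insert 0 (abs ` lows))"
  have L: "\<bar>x\<bar> \<le> L" if "x \<in> lows" for x unfolding L_def using finite_lows that by (intro Max_ge) auto
  have "?S \<subseteq> (\<lambda>(x, y). u ^ Suc T * x + y) ` (bounded_horner_values (B + L) \<times> lows)"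
  proof
    fix p assume "p \<in> ?S"
    then obtain c n where c: "\<forall>i j. \<bar>c i j\<bar> \<le> M"
      and prefixes: "\<forall>n'\<le>n. \<bar>horner u (\<lambda>i. \<Sum>j\<le>Suc T. of_int (c i j) * u ^ j) n'\<bar> \<le> B"
      and p: "p = horner u (\<lambda>i. \<Sum>j\<le>Suc T. of_int (c i j) * u ^ j) n" by auto
    define z where "z i = horner_low c i T + c i (Suc T)" for i
    note split = horner_poly_digits[of u c T, folded z_def]
    have low_in: "(\<Sum>e\<le>T. of_int (horner_low c n' e) * u ^ e) \<in> lows" for n'
    proof -
      have "horner_low c n' e \<in> low_range" if "e \<le> T" for e
      proof -
        have "M \<ge> 0" using c by (meson abs_ge_zero order_trans)
        then have "int (Suc e) * M \<le> int (Suc T) * M" using that by (intro mult_right_mono) auto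
        then show ?thesis
          using horner_low_bound[OF c, of n' e] unfolding low_range_def by (simp add: abs_le_iff)
      qed
      then have "restrict (horner_low c n') {..T} \<in> PiE {..T} (\<lambda>_. low_range)" by auto
      then show ?thesis unfolding lows_def by (rule image_eqI[rotated]) simp
    qed
    have "horner u (\<lambda>i. of_int (z i)) n \<in> bounded_horner_values (B + L)"
      unfolding bounded_horner_values_def
    proof (intro CollectI exI conjI allI impI)
      fix n' assume n': "n' \<le> n"
      have "\<bar>u ^ Suc T * horner u (\<lambda>i. of_int (z i)) n'\<bar> \<le> B + L"
        using split[of n'] prefixes n' L[OF low_in[of n']] by (smt (verit))
      moreover have "1 \<le> u ^ Suc T" using u by (intro one_le_power) simp
      then have "\<bar>horner u (\<lambda>i. of_int (z i)) n'\<bar> \<le> \<bar>u ^ Suc T * horner u (\<lambda>i. of_int (z i)) n'\<bar>"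
        using mult_right_mono[OF _ abs_ge_zero, of 1 "u ^ Suc T" "horner u (\<lambda>i. of_int (z i)) n'"] u
        by (simp add: abs_mult)
      ultimately show "\<bar>horner u (\<lambda>i. of_int (z i)) n'\<bar> \<le> B + L" by linarith
    qed simp
    then show "p \<in> (\<lambda>(x, y). u ^ Suc T * x + y) ` (bounded_horner_values (B + L) \<times> lows)"
      using p split[of n] low_in[of n] by force
  qed
  moreover have "finite (bounded_horner_values (B + L))"
    by (rule finite_bounded_horner_values)
  ultimately show ?thesis
    using finite_lows by (rule finite_subset[OF _ finite_imageI[OF finite_cartesian_product]])
qed

definition bounded_horner_values_over :: "real set \<Rightarrow> real \<Rightarrow> real set" where
  "bounded_horner_values_over D B =
     {horner u d n | d n. (\<forall>i<n. d i \<in> D) \<and> (\<forall>n'\<le>n. \<bar>horner u d n'\<bar> \<le> B)}"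

lemma finite_bounded_horner_values_over:
  assumes "finite D" and D: "D \<subseteq> laurent_span s T"
  shows "finite (bounded_horner_values_over D B)"
proof -
  define coeffs where "coeffs d = (SOME c::nat \<Rightarrow> int. d = u powi (- int s) * (\<Sum>j\<le>Suc T. of_int (c j) * u ^ j))" for d
  have coeffs: "u ^ s * d = (\<Sum>j\<le>Suc T. of_int (coeffs d j) * u ^ j)" if "d \<in> D" for d
  proof -
    have "\<exists>c::nat \<Rightarrow> int. d = u powi (- int s) * (\<Sum>j\<le>Suc T. of_int (c j) * u ^ j)"
      using D that unfolding laurent_span_def by blast
    then have "d = u powi (- int s) * (\<Sum>j\<le>Suc T. of_int (coeffs d j) * u ^ j)"
      unfolding coeffs_def by (rule someI_ex)
    then show ?thesis using u_nonzero by (simp add: power_int_minus field_simps)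
  qed
  define M where "M = Max (insert 0 ((\<lambda>(d, j). \<bar>coeffs d j\<bar>) ` (D \<times> {..Suc T})))"
  have fin: "finite (insert 0 ((\<lambda>(d, j). \<bar>coeffs d j\<bar>) ` (D \<times> {..Suc T})))"
    using \<open>finite D\<close> by simp
  have M: "\<bar>coeffs d j\<bar> \<le> M" if "d \<in> D" "j \<le> Suc T" for d j
    unfolding M_def using that by (intro Max_ge[OF fin]) force
  have "0 \<le> M" unfolding M_def by (intro Max_ge[OF fin]) simp
  have "u ^ s > 0" using u by simp
  let ?hp = "\<lambda>c n. horner u (\<lambda>i. \<Sum>j\<le>Suc T. of_int (c i j) * u ^ j) n"
  let ?P = "{?hp c n | c n. (\<forall>i j. \<bar>c i j\<bar> \<le> M) \<and> (\<forall>n'\<le>n. \<bar>?hp c n'\<bar> \<le> u ^ s * B)}"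
  have "finite ?P"
    by (rule finite_bounded_horner_poly_values)
  moreover have "bounded_horner_values_over D B \<subseteq> (\<lambda>x. x / u ^ s) ` ?P"
  proof
    fix p assume "p \<in> bounded_horner_values_over D B"
    then obtain d n where d: "\<forall>i<n. d i \<in> D" and prefixes: "\<forall>n'\<le>n. \<bar>horner u d n'\<bar> \<le> B"
      and p: "p = horner u d n"
      unfolding bounded_horner_values_over_def by auto
    define c where "c i j = (if i < n \<and> j \<le> Suc T then coeffs (d i) j else 0)" for i j
    have "\<forall>i j. \<bar>c i j\<bar> \<le> M" unfolding c_def using M d \<open>0 \<le> M\<close> by auto
    moreover have scaled: "?hp c n' = u ^ s * horner u d n'" if "n' \<le> n" for n'
    proof -
      have "?hp c n' = horner u (\<lambda>i. u ^ s * d i) n'"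
        using that d by (intro horner_cong) (auto simp: coeffs c_def)
      then show ?thesis by (simp add: horner_mult)
    qed
    ultimately have "u ^ s * p \<in> ?P"
      using p prefixes \<open>u ^ s > 0\<close> by (auto simp: abs_mult intro!: exI[of _ c] exI[of _ n])
    moreover have "p = (u ^ s * p) / u ^ s" using u_nonzero by simp
    ultimately show "p \<in> (\<lambda>x. x / u ^ s) ` ?P" by blast
  qed
  ultimately show ?thesis by (rule finite_subset[OF _ finite_imageI, rotated])
qed

end

section \<open>Automata\<close>

lemma regular_lang_foldl:
  fixes \<delta> :: "'q \<Rightarrow> 'c \<Rightarrow> 'q"
  assumes fin: "finite {foldl \<delta> q0 xs | xs. True}"
  shows "regular_lang {xs. foldl \<delta> q0 xs \<in> F}"
proof -
  define R where "R = {foldl \<delta> q0 xs | xs. True}"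
  obtain n :: nat and f where Rf: "R = f ` {i. i < n}" and inj: "inj_on f {i. i < n}"
    using finite_imp_nat_seg_image_inj_on[OF fin[folded R_def]] by auto
  define \<iota> where "\<iota> = the_inv_into {i. i < n} f"
  have f_\<iota>: "f (\<iota> r) = r" if "r \<in> R" for r
    unfolding \<iota>_def using that Rf inj by (simp add: f_the_inv_into_f)
  have \<iota>_range: "\<iota> r \<in> {i. i < n}" if "r \<in> R" for r
    unfolding \<iota>_def using that Rf inj by (metis the_inv_into_into subset_refl)
  have reach: "foldl \<delta> q0 xs \<in> R" for xs unfolding R_def by blast
  define \<delta>' where "\<delta>' i c = \<iota> (\<delta> (f i) c)" for i c
  have run: "foldl \<delta>' (\<iota> q0) xs = \<iota> (foldl \<delta> q0 xs)" for xs
    by (induction xs rule: rev_induct) (use f_\<iota>[OF reach] in \<open>simp_all add: \<delta>'_def\<close>)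
  show ?thesis unfolding regular_lang_def
  proof (intro exI conjI)
    show "\<iota> q0 \<in> {i. i < n}" using \<iota>_range[OF reach[of "[]"]] by simp
    show "\<forall>q\<in>{i. i < n}. \<forall>a. \<delta>' q a \<in> {i. i < n}"
    proof (intro ballI allI)
      fix q a assume "q \<in> {i. i < n}"
      then obtain xs where "f q = foldl \<delta> q0 xs" using Rf unfolding R_def by auto
      then have "\<delta> (f q) a = foldl \<delta> q0 (xs @ [a])" by simp
      then show "\<delta>' q a \<in> {i. i < n}" unfolding \<delta>'_def using \<iota>_range reach by metis
    qed
    show "{xs. foldl \<delta> q0 xs \<in> F} = {xs. foldl \<delta>' (\<iota> q0) xs \<in> {i. i < n \<and> f i \<in> F}}"
      unfolding run using \<iota>_range[OF reach] f_\<iota>[OF reach] by auto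
  qed auto
qed

lemma foldl_pair: "foldl (\<lambda>(a, b) c. (f a c, g b c)) (a0, b0) xs = (foldl f a0 xs, foldl g b0 xs)"
  by (induction xs arbitrary: a0 b0) auto

lemma regular_lang_foldl_conj:
  assumes "finite {foldl f a0 xs | xs. True}" "finite {foldl g b0 xs | xs. True}"
  shows "regular_lang {xs. foldl f a0 xs \<in> F1 \<and> foldl g b0 xs \<in> F2}"
proof -
  have "finite {foldl (\<lambda>(a, b) c. (f a c, g b c)) (a0, b0) xs | xs. True}"
    by (rule finite_subset[OF _ finite_cartesian_product[OF assms]]) (auto simp: foldl_pair)
  then have "regular_lang {xs. foldl (\<lambda>(a, b) c. (f a c, g b c)) (a0, b0) xs \<in> F1 \<times> F2}"
    by (rule regular_lang_foldl)
  then show ?thesis by (simp add: foldl_pair)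
qed

definition horner_list :: "real \<Rightarrow> ('c \<Rightarrow> real) \<Rightarrow> 'c list \<Rightarrow> real" where
  "horner_list u g xs = foldl (\<lambda>P c. u * P + g c) 0 xs"

lemma horner_list_Nil [simp]: "horner_list u g [] = 0"
  by (simp add: horner_list_def)

lemma horner_list_snoc [simp]: "horner_list u g (xs @ [c]) = u * horner_list u g xs + g c"
  by (simp add: horner_list_def)

lemma horner_list_cong: "(\<And>c. c \<in> set xs \<Longrightarrow> g c = g' c) \<Longrightarrow> horner_list u g xs = horner_list u g' xs"
  by (induction xs rule: rev_induct) auto

lemma horner_eq_horner_list: "k \<le> length xs \<Longrightarrow> horner u (\<lambda>i. g (xs ! i)) k = horner_list u g (take k xs)"
proof (induction k)
  case 0
  then show ?case by simp
next
  case (Suc k)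
  then have "take (Suc k) xs = take k xs @ [xs ! k]" by (simp add: take_Suc_conv_app_nth)
  then show ?case using Suc by simp
qed

lemma horner_list_sum: "horner_list u (\<lambda>c. \<Sum>i\<in>I. f i c) xs = (\<Sum>i\<in>I. horner_list u (f i) xs)"
  by (induction xs rule: rev_induct) (auto simp: sum.distrib sum_distrib_left)

lemma horner_list_mult: "horner_list u (\<lambda>c. a * f c) xs = a * horner_list u f xs"
  by (induction xs rule: rev_induct) (auto simp: algebra_simps)

lemma horner_list_conv_sum: "horner_list u g xs = (\<Sum>j<length xs. g (xs ! j) * u ^ (length xs - 1 - j))"
proof (induction xs rule: rev_induct)
  case Nil
  then show ?case by simp
next
  case (snoc x xs)
  have "(\<Sum>j<length xs. g (xs ! j) * u ^ (length xs - j)) =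
      u * (\<Sum>j<length xs. g (xs ! j) * u ^ (length xs - 1 - j))"
    by (simp add: sum_distrib_left algebra_simps)
      (intro sum.cong refl, simp add: Suc_diff_Suc power_Suc[symmetric])
  then show ?case using snoc by (simp add: nth_append)
qed

text \<open>Once a Horner value has left \<open>[-B, B]\<close>, digits of size at most \<open>(u - 1) * B\<close>
  cannot bring it back, so its sign is already decided.\<close>

lemma horner_escape:
  fixes u B P y :: real
  assumes "u > 1" "\<bar>y\<bar> \<le> (u - 1) * B" "P > B"
  shows "u * P + y > B"
proof -
  have "(u - 1) * P \<ge> (u - 1) * B" using assms by (intro mult_left_mono) auto
  then show ?thesis using assms by (simp add: algebra_simps abs_le_iff)
qed

context algC_setting
begin

definition carry_step :: "real \<Rightarrow> ('c \<Rightarrow> real) \<Rightarrow> real + bool \<Rightarrow> 'c \<Rightarrow> real + bool" where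
  "carry_step B g s c = (case s of
      Inl P \<Rightarrow> (if \<bar>u * P + g c\<bar> \<le> B then Inl (u * P + g c) else Inr (u * P + g c > 0))
    | Inr b \<Rightarrow> Inr b)"

lemma carry_run:
  assumes g: "\<forall>c. \<bar>g c\<bar> \<le> (u - 1) * B" and "0 \<le> B"
  shows "(case foldl (carry_step B g) (Inl 0) xs of
      Inl P \<Rightarrow> P = horner_list u g xs \<and> (\<forall>k\<le>length xs. \<bar>horner_list u g (take k xs)\<bar> \<le> B)
    | Inr b \<Rightarrow> (if b then horner_list u g xs > B else horner_list u g xs < - B))"
proof (induction xs rule: rev_induct)
  case Nil
  then show ?case using \<open>0 \<le> B\<close> by simp
next
  case (snoc x xs)
  show ?case
  proof (cases "foldl (carry_step B g) (Inl 0) xs")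
    case (Inl P)
    with snoc have P: "P = horner_list u g xs"
      and prefixes: "\<forall>k\<le>length xs. \<bar>horner_list u g (take k xs)\<bar> \<le> B" by auto
    have step: "foldl (carry_step B g) (Inl 0) (xs @ [x]) = carry_step B g (Inl P) x"
      using Inl by simp
    show ?thesis
    proof (cases "\<bar>u * P + g x\<bar> \<le> B")
      case True
      have "\<bar>horner_list u g (take k (xs @ [x]))\<bar> \<le> B" if "k \<le> Suc (length xs)" for k
        using that prefixes True P by (cases "k = Suc (length xs)") auto
      then show ?thesis unfolding step using True P by (simp add: carry_step_def)
    next
      case False
      then show ?thesis unfolding step using P by (auto simp: carry_step_def)
    qed
  next
    case (Inr b)
    have "horner_list u g (xs @ [x]) > B" if "horner_list u g xs > B"
      using horner_escape[OF u g[rule_format] that] by simp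
    moreover have "horner_list u g (xs @ [x]) < - B" if "horner_list u g xs < - B"
      using horner_escape[of u "- g x" B "- horner_list u g xs"] u g that by simp
    moreover have "foldl (carry_step B g) (Inl 0) (xs @ [x]) = Inr b"
      using Inr by (simp add: carry_step_def)
    ultimately show ?thesis using snoc Inr by (simp split: if_splits)
  qed
qed

lemma finite_carry_states:
  assumes "0 \<le> B" and finite_g: "finite (range g)" and g_span: "range g \<subseteq> laurent_span s T"
    and g: "\<forall>c. \<bar>g c\<bar> \<le> (u - 1) * B"
  shows "finite {foldl (carry_step B g) (Inl 0) xs | xs. True}"
proof -
  have "{foldl (carry_step B g) (Inl 0) xs | xs. True} \<subseteq>
      Inl ` bounded_horner_values_over (range g) B \<union> range Inr"
  proof
    fix q assume "q \<in> {foldl (carry_step B g) (Inl 0) xs | xs. True}"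
    then obtain xs where q: "q = foldl (carry_step B g) (Inl 0) xs" by auto
    show "q \<in> Inl ` bounded_horner_values_over (range g) B \<union> range Inr"
    proof (cases q)
      case (Inl P)
      then have "P = horner_list u g xs \<and> (\<forall>k\<le>length xs. \<bar>horner_list u g (take k xs)\<bar> \<le> B)"
        using carry_run[OF g \<open>0 \<le> B\<close>, of xs] q by simp
      then have "P \<in> bounded_horner_values_over (range g) B"
        unfolding bounded_horner_values_over_def
        by (auto simp: horner_eq_horner_list intro!: exI[of _ "\<lambda>i. g (xs ! i)"] exI[of _ "length xs"])
      then show ?thesis using Inl by auto
    qed auto
  qed
  moreover have "finite (bounded_horner_values_over (range g) B)"
    by (rule finite_bounded_horner_values_over[OF finite_g g_span])
  moreover have "finite (range (Inr :: bool \<Rightarrow> real + bool))" by simp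
  ultimately show ?thesis by (meson finite_UnI finite_imageI finite_subset)
qed
end

text \<open>An automaton with states 0 to 3 (3 = reject) checking that the positions holding
  \<open>True\<close> form an interval.\<close>

definition interval_step :: "nat \<Rightarrow> bool \<Rightarrow> nat" where
  "interval_step p b = (if p = 0 then (if b then 1 else 0) else if p = 1 then (if b then 1 else 2)
     else if p = 2 then (if b then 3 else 2) else 3)"

definition seen_T :: "bool list \<Rightarrow> bool" where
  "seen_T bs \<longleftrightarrow> (\<exists>j<length bs. bs ! j)"

definition seen_TF :: "bool list \<Rightarrow> bool" where
  "seen_TF bs \<longleftrightarrow> (\<exists>j1 j2. j1 < j2 \<and> j2 < length bs \<and> bs ! j1 \<and> \<not> bs ! j2)"

definition seen_TFT :: "bool list \<Rightarrow> bool" where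
  "seen_TFT bs \<longleftrightarrow>
     (\<exists>j1 j2 j3. j1 < j2 \<and> j2 < j3 \<and> j3 < length bs \<and> bs ! j1 \<and> \<not> bs ! j2 \<and> bs ! j3)"

lemma seen_T_snoc: "seen_T (bs @ [b]) \<longleftrightarrow> seen_T bs \<or> b"
proof
  assume "seen_T (bs @ [b])"
  then obtain j where j: "j < Suc (length bs)" "(bs @ [b]) ! j" unfolding seen_T_def by auto
  show "seen_T bs \<or> b"
  proof (cases "j = length bs")
    case True then show ?thesis using j by simp
  next
    case False then have "seen_T bs" using j unfolding seen_T_def by (intro exI[of _ j]) (auto simp: nth_append)
    then show ?thesis by simp
  qed
next
  assume "seen_T bs \<or> b"
  then show "seen_T (bs @ [b])"
  proof
    assume "seen_T bs" then obtain j where "j < length bs" "bs ! j" unfolding seen_T_def by auto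
    then show ?thesis unfolding seen_T_def by (intro exI[of _ j]) (auto simp: nth_append)
  next
    assume "b" then show ?thesis unfolding seen_T_def by (intro exI[of _ "length bs"]) auto
  qed
qed

lemma seen_TF_snoc: "seen_TF (bs @ [b]) \<longleftrightarrow> seen_TF bs \<or> (\<not> b \<and> seen_T bs)"
proof
  assume "seen_TF (bs @ [b])"
  then obtain j1 j2 where j: "j1 < j2" "j2 < Suc (length bs)" "(bs @ [b]) ! j1" "\<not> (bs @ [b]) ! j2"
    unfolding seen_TF_def by auto
  show "seen_TF bs \<or> (\<not> b \<and> seen_T bs)"
  proof (cases "j2 = length bs")
    case True then show ?thesis using j unfolding seen_T_def by (auto simp: nth_append)
  next
    case False then have "seen_TF bs" using j unfolding seen_TF_def by (intro exI[of _ j1] exI[of _ j2]) (auto simp: nth_append)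
    then show ?thesis by simp
  qed
next
  assume "seen_TF bs \<or> (\<not> b \<and> seen_T bs)"
  then show "seen_TF (bs @ [b])"
  proof
    assume "seen_TF bs"
    then obtain j1 j2 where "j1 < j2" "j2 < length bs" "bs ! j1" "\<not> bs ! j2" unfolding seen_TF_def by auto
    then show ?thesis unfolding seen_TF_def by (intro exI[of _ j1] exI[of _ j2]) (auto simp: nth_append)
  next
    assume "\<not> b \<and> seen_T bs"
    then obtain j where "j < length bs" "bs ! j" "\<not> b" unfolding seen_T_def by auto
    then show ?thesis unfolding seen_TF_def by (intro exI[of _ j] exI[of _ "length bs"]) (auto simp: nth_append)
  qed
qed

lemma seen_TFT_snoc: "seen_TFT (bs @ [b]) \<longleftrightarrow> seen_TFT bs \<or> (b \<and> seen_TF bs)"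
proof
  assume "seen_TFT (bs @ [b])"
  then obtain j1 j2 j3 where j: "j1 < j2" "j2 < j3" "j3 < Suc (length bs)" "(bs @ [b]) ! j1" "\<not> (bs @ [b]) ! j2" "(bs @ [b]) ! j3"
    unfolding seen_TFT_def by auto
  show "seen_TFT bs \<or> (b \<and> seen_TF bs)"
  proof (cases "j3 = length bs")
    case True then have "seen_TF bs \<and> b" using j unfolding seen_TF_def by (intro conjI exI[of _ j1] exI[of _ j2]) (auto simp: nth_append)
    then show ?thesis by simp
  next
    case False then have "seen_TFT bs" using j unfolding seen_TFT_def
      by (intro exI[of _ j1] exI[of _ j2] exI[of _ j3]) (auto simp: nth_append)
    then show ?thesis by simp
  qed
next
  assume "seen_TFT bs \<or> (b \<and> seen_TF bs)"
  then show "seen_TFT (bs @ [b])"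
  proof
    assume "seen_TFT bs"
    then obtain j1 j2 j3 where "j1 < j2" "j2 < j3" "j3 < length bs" "bs ! j1" "\<not> bs ! j2" "bs ! j3"
      unfolding seen_TFT_def by auto
    then show ?thesis unfolding seen_TFT_def
      by (intro exI[of _ j1] exI[of _ j2] exI[of _ j3]) (auto simp: nth_append)
  next
    assume "b \<and> seen_TF bs"
    then obtain j1 j2 where "j1 < j2" "j2 < length bs" "bs ! j1" "\<not> bs ! j2" "b" unfolding seen_TF_def by auto
    then show ?thesis unfolding seen_TFT_def
      by (intro exI[of _ j1] exI[of _ j2] exI[of _ "length bs"]) (auto simp: nth_append)
  qed
qed

lemma seen_TF_imp_seen_T: "seen_TF bs \<Longrightarrow> seen_T bs"
  unfolding seen_TF_def seen_T_def by (blast intro: less_trans)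

lemma seen_TFT_imp_seen_TF: "seen_TFT bs \<Longrightarrow> seen_TF bs"
  unfolding seen_TF_def seen_TFT_def by (blast intro: less_trans)

lemma foldl_interval_step:
  "foldl interval_step 0 bs =
     (if seen_TFT bs then 3 else if seen_TF bs then 2 else if seen_T bs then 1 else 0)"
proof (induction bs rule: rev_induct)
  case Nil
  then show ?case by (simp add: seen_T_def seen_TF_def seen_TFT_def)
next
  case (snoc b bs)
  then show ?case using seen_TF_imp_seen_T[of bs] seen_TFT_imp_seen_TF[of bs]
    by (auto simp: seen_T_snoc seen_TF_snoc seen_TFT_snoc interval_step_def)
qed

lemma interval_iff_not_seen_TFT: "(\<exists>a b. \<forall>j<length bs. bs ! j \<longleftrightarrow> a \<le> j \<and> j < b) \<longleftrightarrow> \<not> seen_TFT bs"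
proof
  assume "\<exists>a b. \<forall>j<length bs. bs ! j \<longleftrightarrow> a \<le> j \<and> j < b"
  then obtain a b where ab: "\<forall>j<length bs. bs ! j \<longleftrightarrow> a \<le> j \<and> j < b" by auto
  show "\<not> seen_TFT bs"
  proof
    assume "seen_TFT bs"
    then obtain j1 j2 j3 where "j1 < j2" "j2 < j3" "j3 < length bs" "bs ! j1" "\<not> bs ! j2" "bs ! j3"
      unfolding seen_TFT_def by auto
    then show False using ab by (meson le_less_trans less_imp_le_nat less_trans)
  qed
next
  assume np: "\<not> seen_TFT bs"
  show "\<exists>a b. \<forall>j<length bs. bs ! j \<longleftrightarrow> a \<le> j \<and> j < b"
  proof (cases "seen_T bs")
    case False
    then show ?thesis unfolding seen_T_def by (intro exI[of _ 0] exI[of _ 0]) auto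
  next
    case True
    define J where "J = {j. j < length bs \<and> bs ! j}"
    have fJ: "finite J" "J \<noteq> {}" using True unfolding J_def seen_T_def by auto
    define lo where "lo = Min J"
    define hi where "hi = Max J"
    have aJ: "lo \<in> J" "\<forall>j\<in>J. lo \<le> j" unfolding lo_def using fJ by auto
    have bJ: "hi \<in> J" "\<forall>j\<in>J. j \<le> hi" unfolding hi_def using fJ by auto
    have "\<forall>j<length bs. bs ! j \<longleftrightarrow> lo \<le> j \<and> j < Suc hi"
    proof (intro allI impI iffI)
      fix j assume j: "j < length bs" "bs ! j"
      then show "lo \<le> j \<and> j < Suc hi" using aJ bJ unfolding J_def by auto
    next
      fix j assume j: "j < length bs" and jab: "lo \<le> j \<and> j < Suc hi"
      show "bs ! j"
      proof (rule ccontr)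
        assume nj: "\<not> bs ! j"
        have "lo \<noteq> j" using nj aJ unfolding J_def by auto
        then have j1: "lo < j" using jab by simp
        have "hi \<noteq> j" using nj bJ unfolding J_def by auto
        then have j2: "j < hi" using jab by linarith
        from j1 j2 have "seen_TFT bs" using aJ(1) bJ(1) nj unfolding seen_TFT_def J_def
          by (intro exI[of _ lo] exI[of _ j] exI[of _ hi]) auto
        then show False using np by simp
      qed
    qed
    then show ?thesis by blast
  qed
qed

lemma interval_iff_foldl_interval_step:
  "(\<exists>a b. \<forall>j<length bs. bs ! j \<longleftrightarrow> a \<le> j \<and> j < b) \<longleftrightarrow> foldl interval_step 0 bs \<noteq> 3"
  unfolding interval_iff_not_seen_TFT foldl_interval_step by auto

lemma unique_index_iff_length_filter:
  "(\<exists>f<length s. \<forall>j<length s. P (s ! j) \<longleftrightarrow> j = f) \<longleftrightarrow> length (filter P s) = 1"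
proof -
  have "length (filter P s) = card {j. j < length s \<and> P (s ! j)}"
    by (rule length_filter_conv_card)
  moreover have "card {j. j < length s \<and> P (s ! j)} = 1 \<longleftrightarrow> (\<exists>f. {j. j < length s \<and> P (s ! j)} = {f})"
    by (metis One_nat_def card_1_singleton_iff)
  ultimately show ?thesis by (auto simp: set_eq_iff)
qed

text \<open>Letters of \<open>enc (conv ws)\<close>: the tuple of symbols (inner \<open>None\<close> is the padding symbol,
  outer \<open>None\<close> only occurs outside the convolution) and the flag marking position 0.\<close>

type_synonym letter = "int option list option \<times> bool"

definition letter_has :: "nat \<Rightarrow> letter \<Rightarrow> bool" where
  "letter_has i c = (case fst c of Some xs \<Rightarrow> i < length xs \<and> xs ! i \<noteq> None | None \<Rightarrow> False)"

definition letter_digit :: "nat \<Rightarrow> letter \<Rightarrow> int" where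
  "letter_digit i c = (case fst c of Some xs \<Rightarrow> (case xs ! i of Some d \<Rightarrow> d | None \<Rightarrow> 0) | None \<Rightarrow> 0)"

definition letter_ok :: "nat \<Rightarrow> int \<Rightarrow> letter \<Rightarrow> bool" where
  "letter_ok r E c = (case fst c of
      None \<Rightarrow> False
    | Some xs \<Rightarrow> length xs = r \<and> (\<exists>x\<in>set xs. x \<noteq> None) \<and> (\<forall>x\<in>set xs. \<forall>d. x = Some d \<longrightarrow> \<bar>d\<bar> < E)
        \<and> (snd c \<longrightarrow> (\<forall>x\<in>set xs. x \<noteq> None)))"

definition well_formed :: "nat \<Rightarrow> int \<Rightarrow> letter list \<Rightarrow> bool" where
  "well_formed r E s \<longleftrightarrow> (\<forall>c\<in>set s. letter_ok r E c) \<and>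
     (\<exists>f<length s. \<forall>j<length s. snd (s ! j) \<longleftrightarrow> j = f) \<and>
     (\<forall>i<r. \<exists>a b. \<forall>j<length s. letter_has i (s ! j) \<longleftrightarrow> a \<le> j \<and> j < b)"

definition shape_step :: "nat \<Rightarrow> int \<Rightarrow> bool \<times> nat \<times> nat list \<Rightarrow> letter \<Rightarrow> bool \<times> nat \<times> nat list" where
  "shape_step r E q c = (case q of (ok, n, ps) \<Rightarrow>
     (ok \<and> letter_ok r E c, min 2 (n + (if snd c then 1 else 0)),
      map (\<lambda>i. interval_step (ps ! i) (letter_has i c)) [0..<r]))"

lemma foldl_shape_step:
  "foldl (shape_step r E) (True, 0, replicate r 0) s =
     ((\<forall>c\<in>set s. letter_ok r E c), min 2 (length (filter snd s)),
      map (\<lambda>i. foldl interval_step 0 (map (letter_has i) s)) [0..<r])"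
  by (induction s rule: rev_induct) (auto simp: shape_step_def map_replicate_trivial)

definition shape_accepting :: "(bool \<times> nat \<times> nat list) set" where
  "shape_accepting = {(ok, n, ps). ok \<and> n = 1 \<and> (\<forall>p\<in>set ps. p \<noteq> 3)}"

lemma well_formed_iff_shape_step:
  "well_formed r E s \<longleftrightarrow> foldl (shape_step r E) (True, 0, replicate r 0) s \<in> shape_accepting"
proof -
  have "(\<forall>i<r. \<exists>a b. \<forall>j<length s. letter_has i (s ! j) \<longleftrightarrow> a \<le> j \<and> j < b) \<longleftrightarrow>
     (\<forall>p\<in>set (map (\<lambda>i. foldl interval_step 0 (map (letter_has i) s)) [0..<r]). p \<noteq> 3)"
    using interval_iff_foldl_interval_step[of "map (letter_has _) s"] by auto
  moreover have "(\<exists>f<length s. \<forall>j<length s. snd (s ! j) \<longleftrightarrow> j = f) \<longleftrightarrow>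
      min 2 (length (filter snd s)) = 1"
    using unique_index_iff_length_filter[of s snd] by auto
  ultimately show ?thesis unfolding well_formed_def foldl_shape_step shape_accepting_def by auto
qed

lemma finite_shape_states: "finite {foldl (shape_step r E) (True, 0, replicate r 0) s | s. True}"
proof (rule finite_subset)
  show "{foldl (shape_step r E) (True, 0, replicate r 0) s | s. True} \<subseteq>
      UNIV \<times> {..2} \<times> {ps. set ps \<subseteq> {..3} \<and> length ps = r}"
    by (auto simp: foldl_shape_step foldl_interval_step)
  show "finite ((UNIV :: bool set) \<times> {..2::nat} \<times> {ps. set ps \<subseteq> {..3::nat} \<and> length ps = r})"
    by (intro finite_cartesian_product finite_lists_length_eq) auto
qed

lemma letter_okE:
  assumes "letter_ok r E c"
  obtains xs where "fst c = Some xs" "length xs = r" "\<exists>x\<in>set xs. x \<noteq> None"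
    "\<forall>x\<in>set xs. \<forall>d. x = Some d \<longrightarrow> \<bar>d\<bar> < E" "snd c \<longrightarrow> (\<forall>x\<in>set xs. x \<noteq> None)"
  using assms unfolding letter_ok_def by (cases "fst c") auto

lemma letter_ok_digit_bound:
  assumes "letter_ok r E c" "i < r"
  shows "\<bar>letter_digit i c\<bar> < E"
proof -
  obtain xs where xs: "fst c = Some xs" "length xs = r" "\<exists>x\<in>set xs. x \<noteq> None"
    "\<forall>x\<in>set xs. \<forall>d. x = Some d \<longrightarrow> \<bar>d\<bar> < E" using assms(1) by (rule letter_okE)
  then have "E > 0" by (metis abs_ge_zero le_less_trans option.exhaust)
  then show ?thesis
    using xs assms(2) by (cases "xs ! i") (auto simp: letter_digit_def dest: nth_mem)
qed

section \<open>Encodings of convolutions of digit words\<close>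

lemma wlo_le_0: "finite (wdom w) \<Longrightarrow> wlo w \<le> 0" unfolding wlo_def by (intro Min_le) auto
lemma whi_ge_0: "finite (wdom w) \<Longrightarrow> whi w \<ge> 0" unfolding whi_def by (intro Max_ge) auto
lemma wlo_le: "finite (wdom w) \<Longrightarrow> k \<in> wdom w \<Longrightarrow> wlo w \<le> k" unfolding wlo_def by (intro Min_le) auto
lemma whi_ge: "finite (wdom w) \<Longrightarrow> k \<in> wdom w \<Longrightarrow> k \<le> whi w" unfolding whi_def by (intro Max_ge) auto
lemma wlo_in: "finite (wdom w) \<Longrightarrow> wlo w \<in> wdom w \<or> wlo w = 0"
  unfolding wlo_def using Min_in[of "wdom w \<union> {0}"] by auto
lemma whi_in: "finite (wdom w) \<Longrightarrow> whi w \<in> wdom w \<or> whi w = 0"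
  unfolding whi_def using Max_in[of "wdom w \<union> {0}"] by auto

lemma enc_length: "length (enc w) = nat (whi w - wlo w + 1)"
  by (simp add: enc_def)

lemma enc_nth:
  assumes "j < length (enc w)"
  shows "enc w ! j = (w (whi w - int j), whi w - int j = 0)"
proof -
  have l: "length [wlo w..whi w] = nat (whi w - wlo w + 1)" by simp
  have j: "j < length [wlo w..whi w]" using assms by (simp add: enc_def)
  have "rev [wlo w..whi w] ! j = [wlo w..whi w] ! (length [wlo w..whi w] - Suc j)"
    using j by (simp add: rev_nth)
  also have "\<dots> = wlo w + int (length [wlo w..whi w] - Suc j)"
    by (rule nth_upto) (use j l in linarith)
  also have "\<dots> = whi w - int j" using j l by (simp add: of_nat_diff)
  finally show ?thesis using j by (simp add: enc_def)
qed

lemma horner_list_enc: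
  assumes "finite (wdom w)"
  shows "horner_list u G (enc w) = (\<Sum>k\<in>{wlo w..whi w}. G (w k, k = 0) * u powi (k - wlo w))"
proof -
  define L where "L = nat (whi w - wlo w + 1)"
  have le: "wlo w \<le> whi w" using wlo_le_0[OF assms] whi_ge_0[OF assms] by simp
  have "horner_list u G (enc w) = (\<Sum>j<L. G (enc w ! j) * u ^ (L - 1 - j))"
    unfolding horner_list_conv_sum enc_length L_def ..
  also have "\<dots> = (\<Sum>j<L. G (w (whi w - int j), whi w - int j = 0) * u powi (whi w - int j - wlo w))"
  proof (intro sum.cong refl)
    fix j assume j: "j \<in> {..<L}"
    have "int (L - 1 - j) = whi w - int j - wlo w" using j le unfolding L_def by auto
    then have "u ^ (L - 1 - j) = u powi (whi w - int j - wlo w)" by (metis power_int_of_nat)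
    then show "G (enc w ! j) * u ^ (L - 1 - j) = G (w (whi w - int j), whi w - int j = 0) * u powi (whi w - int j - wlo w)"
      using enc_nth[of j w] j unfolding L_def enc_length by simp
  qed
  also have "\<dots> = (\<Sum>k\<in>{wlo w..whi w}. G (w k, k = 0) * u powi (k - wlo w))"
  proof -
    have "(\<Sum>k\<in>{whi w - (whi w - wlo w + 1) + 1..whi w}. G (w k, k = 0) * u powi (k - wlo w)) =
      (\<Sum>j<nat (whi w - wlo w + 1). G (w (whi w - int j), whi w - int j = 0) * u powi (whi w - int j - wlo w))"
      by (rule sum_int_interval_eq_sum_lessThan) (use le in simp)
    then show ?thesis unfolding L_def by simp
  qed
  finally show ?thesis .
qed

definition digit_word :: "nat \<Rightarrow> nat \<Rightarrow> (int \<Rightarrow> int) \<Rightarrow> int word" where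
  "digit_word m n a = (\<lambda>k. if - int m \<le> k \<and> k \<le> int n then Some (a k) else None)"

lemma digit_words_iff: "w \<in> digit_words E \<longleftrightarrow> (\<exists>m n a. (\<forall>k. \<bar>a k\<bar> < E) \<and> w = digit_word m n a)"
  unfolding digit_words_def digit_word_def by auto

lemma wdom_digit_word: "wdom (digit_word m n a) = {- int m..int n}"
  unfolding wdom_def digit_word_def by auto

lemma val_u_digit_word: "val_u u (digit_word m n a) = (\<Sum>k\<in>{- int m..int n}. of_int (a k) * u powi k)"
  unfolding val_u_def wdom_digit_word by (intro sum.cong refl) (simp add: digit_word_def)

lemma digit_words_0: "w \<in> digit_words E \<Longrightarrow> w 0 \<noteq> None"
  by (auto simp: digit_words_iff digit_word_def)

lemma digit_words_bound: "w \<in> digit_words E \<Longrightarrow> w k = Some d \<Longrightarrow> \<bar>d\<bar> < E"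
  by (auto simp: digit_words_iff digit_word_def split: if_splits)

lemma wdom_conv: "wdom (conv ws) = {k. \<exists>w\<in>set ws. w k \<noteq> None}"
  by (rule set_eqI) (simp add: wdom_def conv_def)

lemma conv_Some: "k \<in> wdom (conv ws) \<Longrightarrow> conv ws k = Some (map (\<lambda>w. w k) ws)"
proof -
  assume "k \<in> wdom (conv ws)"
  then have "\<exists>w\<in>set ws. w k \<noteq> None" by (simp only: wdom_conv) simp
  then show ?thesis by (simp add: conv_def)
qed

lemma finite_wdom_conv:
  assumes "set ws \<subseteq> digit_words E"
  shows "finite (wdom (conv ws))"
proof -
  have "wdom (conv ws) = (\<Union>w\<in>set ws. wdom w)" by (simp only: wdom_conv) (auto simp: wdom_def)
  moreover have "finite (wdom w)" if "w \<in> set ws" for w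
  proof -
    have "w \<in> digit_words E" using assms that by auto
    then show ?thesis unfolding digit_words_iff by (auto simp: wdom_digit_word)
  qed
  ultimately show ?thesis by auto
qed

lemma wdom_conv_interval:
  assumes ws: "set ws \<subseteq> digit_words E" and "ws \<noteq> []"
    and k: "wlo (conv ws) \<le> k" "k \<le> whi (conv ws)"
  shows "k \<in> wdom (conv ws)"
proof -
  have fin: "finite (wdom (conv ws))" by (rule finite_wdom_conv[OF ws])
  obtain w0 where "w0 \<in> set ws" using \<open>ws \<noteq> []\<close> by (cases ws) auto
  then have "0 \<in> wdom (conv ws)" using ws digit_words_0 unfolding wdom_conv by blast
  then have ends: "wlo (conv ws) \<in> wdom (conv ws)" "whi (conv ws) \<in> wdom (conv ws)"
    using wlo_in[OF fin] whi_in[OF fin] by auto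
  obtain k' where "k' \<in> wdom (conv ws)" and k': "k' \<le> k \<and> k \<le> 0 \<or> 0 \<le> k \<and> k \<le> k'"
  proof (cases "k \<le> 0")
    case True
    then show ?thesis using that[of "wlo (conv ws)"] ends k by auto
  next
    case False
    then show ?thesis using that[of "whi (conv ws)"] ends k by auto
  qed
  then obtain w where w: "w \<in> set ws" "w k' \<noteq> None" unfolding wdom_conv by auto
  then obtain m n a where "w = digit_word m n a" using ws digit_words_iff by blast
  then have "w k \<noteq> None" using w k' by (auto simp: digit_word_def split: if_splits)
  then show ?thesis using w unfolding wdom_conv by auto
qed

lemma enc_conv_nth:
  assumes ws: "set ws \<subseteq> digit_words E" and ne: "ws \<noteq> []" and j: "j < length (enc (conv ws))"
  shows "enc (conv ws) ! j = (Some (map (\<lambda>w. w (whi (conv ws) - int j)) ws), whi (conv ws) - int j = 0)"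
    and "whi (conv ws) - int j \<in> wdom (conv ws)"
proof -
  have "wlo (conv ws) \<le> whi (conv ws) - int j" "whi (conv ws) - int j \<le> whi (conv ws)"
    using j unfolding enc_length by auto
  then show k: "whi (conv ws) - int j \<in> wdom (conv ws)" using wdom_conv_interval[OF ws ne] by auto
  show "enc (conv ws) ! j = (Some (map (\<lambda>w. w (whi (conv ws) - int j)) ws), whi (conv ws) - int j = 0)"
    using enc_nth[OF j] conv_Some[OF k] by simp
qed

lemma letter_ok_enc_conv:
  assumes len: "length ws = r" and ws: "set ws \<subseteq> digit_words E" and "ws \<noteq> []"
    and c: "c \<in> set (enc (conv ws))"
  shows "letter_ok r E c"
proof -
  obtain j where j: "j < length (enc (conv ws))" "c = enc (conv ws) ! j"
    using c by (metis in_set_conv_nth)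
  define k where "k = whi (conv ws) - int j"
  have c: "c = (Some (map (\<lambda>w. w k) ws), k = 0)" and "k \<in> wdom (conv ws)"
    using enc_conv_nth[OF ws \<open>ws \<noteq> []\<close> j(1)] j(2) unfolding k_def by auto
  then have "\<exists>x\<in>set (map (\<lambda>w. w k) ws). x \<noteq> None" unfolding wdom_conv by auto
  moreover have "\<bar>d\<bar> < E" if "w \<in> set ws" "w k = Some d" for w d
    using that ws digit_words_bound by blast
  moreover have "w 0 \<noteq> None" if "w \<in> set ws" for w
    using that ws digit_words_0 by blast
  ultimately show ?thesis unfolding c letter_ok_def using len by auto
qed

lemma well_formed_enc_conv:
  assumes len: "length ws = r" and ws: "set ws \<subseteq> digit_words E" and r: "r \<ge> 1"
  shows "well_formed r E (enc (conv ws))"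
proof -
  define s where "s = enc (conv ws)"
  define hi where "hi = whi (conv ws)"
  have ne: "ws \<noteq> []" using len r by auto
  have fin: "finite (wdom (conv ws))" by (rule finite_wdom_conv[OF ws])
  have hi0: "hi \<ge> 0" "wlo (conv ws) \<le> 0" unfolding hi_def using whi_ge_0[OF fin] wlo_le_0[OF fin] by auto
  have L: "length s = nat (hi - wlo (conv ws) + 1)" unfolding s_def hi_def by (rule enc_length)
  have sj: "s ! j = (Some (map (\<lambda>w. w (hi - int j)) ws), hi - int j = 0)" if "j < length s" for j
    using enc_conv_nth[OF ws ne, of j] that unfolding s_def hi_def by auto
  have flag: "\<exists>f<length s. \<forall>j<length s. snd (s ! j) \<longleftrightarrow> j = f"
  proof (intro exI[of _ "nat hi"] conjI allI impI)
    show "nat hi < length s" using L hi0 by simp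
    fix j assume j: "j < length s"
    show "snd (s ! j) \<longleftrightarrow> j = nat hi" using sj[OF j] hi0 by auto
  qed
  have intv: "\<exists>a b. \<forall>j<length s. letter_has i (s ! j) \<longleftrightarrow> a \<le> j \<and> j < b" if i: "i < r" for i
  proof -
    have "ws ! i \<in> set ws" using i len by simp
    then obtain m n a where wi: "ws ! i = digit_word m n a" using ws digit_words_iff by blast
    have "letter_has i (s ! j) \<longleftrightarrow> nat (hi - int n) \<le> j \<and> j < nat (hi + int m + 1)"
      if j: "j < length s" for j
    proof -
      have "letter_has i (s ! j) \<longleftrightarrow> (ws ! i) (hi - int j) \<noteq> None"
        using sj[OF j] i len by (simp add: letter_has_def)
      also have "\<dots> \<longleftrightarrow> - int m \<le> hi - int j \<and> hi - int j \<le> int n" unfolding wi digit_word_def by simp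
      finally show ?thesis by auto
    qed
    then show ?thesis by blast
  qed
  show ?thesis
    unfolding well_formed_def s_def[symmetric] using letter_ok_enc_conv[OF len ws ne] flag intv
    by (auto simp: s_def)
qed

lemma horner_list_enc_conv:
  fixes u :: real
  assumes len: "length ws = r" and ws: "set ws \<subseteq> digit_words E" and r: "r \<ge> 1" and i: "i < r"
    and u0: "u \<noteq> 0"
  shows "horner_list u (\<lambda>c. of_int (letter_digit i c)) (enc (conv ws)) =
    u powi (- wlo (conv ws)) * val_u u (ws ! i)"
proof -
  define W where "W = conv ws"
  have ne: "ws \<noteq> []" using len r by auto
  have fin: "finite (wdom W)" unfolding W_def by (rule finite_wdom_conv[OF ws])
  define dd where "dd k = (case (ws ! i) k of Some d \<Rightarrow> d | None \<Rightarrow> 0)" for k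
  have "horner_list u (\<lambda>c. of_int (letter_digit i c)) (enc W) =
      (\<Sum>k\<in>{wlo W..whi W}. of_int (letter_digit i (W k, k = 0)) * u powi (k - wlo W))"
    by (rule horner_list_enc[OF fin])
  also have "\<dots> = (\<Sum>k\<in>{wlo W..whi W}. u powi (- wlo W) * (of_int (dd k) * u powi k))"
  proof (intro sum.cong refl)
    fix k assume k: "k \<in> {wlo W..whi W}"
    then have kd: "k \<in> wdom W" unfolding W_def using wdom_conv_interval[OF ws ne] by auto
    have "letter_digit i (W k, k = 0) = dd k"
      using conv_Some[OF kd[unfolded W_def]] i len unfolding W_def dd_def letter_digit_def by simp
    moreover have "u powi (k - wlo W) = u powi (- wlo W) * u powi k"
      using power_int_add[OF disjI1[OF u0], of "- wlo W" k] by simp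
    ultimately show "of_int (letter_digit i (W k, k = 0)) * u powi (k - wlo W) =
        u powi (- wlo W) * (of_int (dd k) * u powi k)"
      by simp
  qed
  also have "\<dots> = u powi (- wlo W) * (\<Sum>k\<in>{wlo W..whi W}. of_int (dd k) * u powi k)"
    by (simp add: sum_distrib_left)
  also have "(\<Sum>k\<in>{wlo W..whi W}. of_int (dd k) * u powi k) = val_u u (ws ! i)"
  proof -
    have sub: "wdom (ws ! i) \<subseteq> {wlo W..whi W}"
    proof
      fix k assume "k \<in> wdom (ws ! i)"
      then have "k \<in> wdom W" unfolding W_def using i len by (simp only: wdom_conv) (auto simp: wdom_def)
      then show "k \<in> {wlo W..whi W}" using wlo_le[OF fin] whi_ge[OF fin] by auto
    qed
    have "val_u u (ws ! i) = (\<Sum>k\<in>wdom (ws ! i). of_int (dd k) * u powi k)"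
      unfolding val_u_def dd_def by (intro sum.cong refl) (auto simp: wdom_def)
    also have "\<dots> = (\<Sum>k\<in>{wlo W..whi W}. of_int (dd k) * u powi k)"
      by (rule sum.mono_neutral_left) (use sub in \<open>auto simp: wdom_def dd_def\<close>)
    finally show ?thesis by simp
  qed
  finally show ?thesis unfolding W_def .
qed

lemma digit_wordsI:
  assumes dom: "wdom w = {- int m..int n}" and bound: "\<forall>k\<in>wdom w. \<bar>the (w k)\<bar> < E" and "E > 0"
  shows "w \<in> digit_words E"
proof -
  define a where "a k = (case w k of Some d \<Rightarrow> d | None \<Rightarrow> 0)" for k
  have "w k = (if - int m \<le> k \<and> k \<le> int n then Some (a k) else None)" for k
    using dom[unfolded wdom_def, THEN eqset_imp_iff, of k] by (cases "w k") (auto simp: a_def)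
  then have "w = digit_word m n a" unfolding digit_word_def by blast
  moreover have "\<bar>a k\<bar> < E" for k
    using bound \<open>E > 0\<close> by (cases "w k") (auto simp: a_def wdom_def)
  ultimately show ?thesis unfolding digit_words_iff by blast
qed

text \<open>Component \<open>i\<close> of the words encoded by \<open>s\<close>, when position 0 sits at index \<open>f\<close> of \<open>s\<close>
  (positions are read from the top, so index \<open>j\<close> holds position \<open>f - j\<close>).\<close>

definition decode :: "letter list \<Rightarrow> nat \<Rightarrow> nat \<Rightarrow> int word" where
  "decode s f i k =
     (if int f - int (length s) < k \<and> k \<le> int f then the (fst (s ! nat (int f - k))) ! i else None)"

lemma decode_in_digit_words:
  assumes wf: "well_formed r E s" and f: "f < length s" "snd (s ! f)" and i: "i < r"
  shows "decode s f i \<in> digit_words E"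
proof -
  define L where "L = length s"
  obtain a b where ab: "\<forall>j<L. letter_has i (s ! j) \<longleftrightarrow> a \<le> j \<and> j < b"
    using wf i unfolding well_formed_def L_def by blast
  have ok: "letter_ok r E (s ! j)" if "j < L" for j
    using wf that unfolding well_formed_def L_def by auto
  have has: "letter_has i (s ! j) \<longleftrightarrow> the (fst (s ! j)) ! i \<noteq> None" if "j < L" for j
    using ok[OF that] i by (elim letter_okE) (simp add: letter_has_def)
  have ok_f: "letter_ok r E (s ! f)" using ok f(1) unfolding L_def by simp
  then obtain xs where "fst (s ! f) = Some xs" "length xs = r" "\<forall>x\<in>set xs. x \<noteq> None"
    using f(2) by (elim letter_okE) auto
  then have "letter_has i (s ! f)" using i by (simp add: letter_has_def)
  then have "a \<le> f" "f < b" using ab f unfolding L_def by auto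
  have "wdom (decode s f i) = {- int (min b L - 1 - f) .. int (f - a)}"
  proof -
    have "decode s f i k \<noteq> None \<longleftrightarrow> int f - int L < k \<and> k \<le> int f \<and> letter_has i (s ! nat (int f - k))" for k
      using has[of "nat (int f - k)"] unfolding decode_def L_def by auto
    also have "\<dots> k \<longleftrightarrow> k \<in> {- int (min b L - 1 - f) .. int (f - a)}" for k
      using ab \<open>a \<le> f\<close> \<open>f < b\<close> f(1) unfolding L_def by (auto simp: nat_less_iff le_nat_iff)
    finally show ?thesis unfolding wdom_def by blast
  qed
  moreover have "\<bar>the (decode s f i k)\<bar> < E" if "k \<in> wdom (decode s f i)" for k
  proof -
    define j where "j = nat (int f - k)"
    have j: "j < L" "decode s f i k = the (fst (s ! j)) ! i"
      using that unfolding wdom_def decode_def j_def L_def by (auto split: if_splits)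
    then show ?thesis
      using ok[OF j(1)] i that unfolding wdom_def by (elim letter_okE) (auto dest!: nth_mem)
  qed
  moreover have "E > 0"
    using letter_ok_digit_bound[OF ok_f i] by linarith
  ultimately show ?thesis by (intro digit_wordsI) auto
qed

lemma enc_conv_decode:
  assumes wf: "well_formed r E s" and f: "f < length s" "\<forall>j<length s. snd (s ! j) \<longleftrightarrow> j = f"
  shows "enc (conv (map (decode s f) [0..<r])) = s"
proof -
  define ws where "ws = map (decode s f) [0..<r]"
  define L where "L = length s"
  have column: "map (\<lambda>w. w (int f - int j)) ws = the (fst (s ! j))"
    and nonempty: "\<exists>w\<in>set ws. w (int f - int j) \<noteq> None"
    and letter: "s ! j = (Some (the (fst (s ! j))), j = f)" if "j < L" for j
  proof -
    have "letter_ok r E (s ! j)" using wf that unfolding well_formed_def L_def by auto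
    then obtain xs where xs: "fst (s ! j) = Some xs" "length xs = r" "\<exists>x\<in>set xs. x \<noteq> None"
      by (elim letter_okE)
    have "decode s f i (int f - int j) = xs ! i" for i
      using that xs(1) unfolding decode_def L_def by simp
    then have "map (\<lambda>w. w (int f - int j)) ws = xs"
      unfolding ws_def using xs(2) by (intro nth_equalityI) simp_all
    then show "map (\<lambda>w. w (int f - int j)) ws = the (fst (s ! j))" using xs(1) by simp
    obtain x where "x \<in> set xs" "x \<noteq> None" using xs(3) by blast
    then show "\<exists>w\<in>set ws. w (int f - int j) \<noteq> None"
      unfolding \<open>map (\<lambda>w. w (int f - int j)) ws = xs\<close>[symmetric] by auto
    show "s ! j = (Some (the (fst (s ! j))), j = f)"
      using xs(1) f(2) that unfolding L_def by (simp add: prod_eq_iff)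
  qed
  have outside: "w k = None" if "w \<in> set ws" "k \<notin> {int f - int L + 1..int f}" for w k
    using that unfolding ws_def decode_def L_def by auto
  have dom: "wdom (conv ws) = {int f - int L + 1..int f}"
  proof (intro set_eqI iffI)
    fix k assume "k \<in> wdom (conv ws)"
    then obtain w where "w \<in> set ws" "w k \<noteq> None" unfolding wdom_conv by auto
    then show "k \<in> {int f - int L + 1..int f}" using outside by (meson ccontr)
  next
    fix k assume "k \<in> {int f - int L + 1..int f}"
    then have "nat (int f - k) < L" "int f - int (nat (int f - k)) = k" by auto
    then show "k \<in> wdom (conv ws)" using nonempty[of "nat (int f - k)"] unfolding wdom_conv by auto
  qed
  have "f < L" using f unfolding L_def by simp
  then have lo: "wlo (conv ws) = int f - int L + 1"
    unfolding wlo_def dom by (intro Min_eqI) auto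
  have hi: "whi (conv ws) = int f"
    unfolding whi_def dom using \<open>f < L\<close> by (intro Max_eqI) auto
  show ?thesis
    unfolding ws_def[symmetric]
  proof (rule nth_equalityI)
    show len: "length (enc (conv ws)) = length s" unfolding enc_length lo hi L_def by simp
    fix j assume j: "j < length (enc (conv ws))"
    then have "j < L" using len unfolding L_def by simp
    then have "conv ws (int f - int j) = Some (the (fst (s ! j)))"
      using conv_Some[of "int f - int j" ws] column[of j] unfolding dom by simp
    then show "enc (conv ws) ! j = s ! j"
      using enc_nth[OF j] letter[OF \<open>j < L\<close>] unfolding hi by (simp add: eq_commute[of f j])
  qed
qed

lemma well_formed_imp_enc_conv:
  assumes wf: "well_formed r E s"
  obtains ws where "length ws = r" "set ws \<subseteq> digit_words E" "enc (conv ws) = s"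
proof -
  obtain f where f: "f < length s" "\<forall>j<length s. snd (s ! j) \<longleftrightarrow> j = f"
    using wf unfolding well_formed_def by auto
  show thesis
  proof (rule that)
    show "length (map (decode s f) [0..<r]) = r" by simp
    show "set (map (decode s f) [0..<r]) \<subseteq> digit_words E"
      using decode_in_digit_words[OF wf f(1)] f by auto
    show "enc (conv (map (decode s f) [0..<r])) = s" by (rule enc_conv_decode[OF wf f])
  qed
qed

lemma enc_conv_image:
  assumes "r \<ge> 1"
  shows "enc ` {conv ws | ws. length ws = r \<and> set ws \<subseteq> digit_words E \<and> P (enc (conv ws))} =
    {xs. well_formed r E xs \<and> P xs}"
proof (intro set_eqI iffI)
  fix xs assume "xs \<in> enc ` {conv ws | ws. length ws = r \<and> set ws \<subseteq> digit_words E \<and> P (enc (conv ws))}"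
  then show "xs \<in> {xs. well_formed r E xs \<and> P xs}" using well_formed_enc_conv[OF _ _ assms] by auto
next
  fix xs assume xs: "xs \<in> {xs. well_formed r E xs \<and> P xs}"
  then obtain ws where "length ws = r" "set ws \<subseteq> digit_words E" "enc (conv ws) = xs"
    using well_formed_imp_enc_conv by blast
  then show "xs \<in> enc ` {conv ws | ws. length ws = r \<and> set ws \<subseteq> digit_words E \<and> P (enc (conv ws))}"
    using xs by blast
qed

section \<open>Automatic relations on digit words\<close>

context algC_setting
begin

lemma laurent_span_add:
  assumes "x \<in> laurent_span s T" "y \<in> laurent_span s T"
  shows "x + y \<in> laurent_span s T"
proof -
  obtain c c' where "x = u powi - int s * (\<Sum>j\<le>Suc T. of_int (c j) * u ^ j)"
    and "y = u powi - int s * (\<Sum>j\<le>Suc T. of_int (c' j) * u ^ j)"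
    using assms unfolding laurent_span_def by auto
  then show ?thesis unfolding laurent_span_def
    by (intro CollectI exI[of _ "\<lambda>j. c j + c' j"]) (simp add: sum.distrib distrib_left distrib_right)
qed

lemma laurent_span_mult_int:
  assumes "x \<in> laurent_span s T"
  shows "of_int n * x \<in> laurent_span s T"
proof -
  obtain c where "x = u powi - int s * (\<Sum>j\<le>Suc T. of_int (c j) * u ^ j)"
    using assms unfolding laurent_span_def by auto
  then show ?thesis unfolding laurent_span_def
    by (intro CollectI exI[of _ "\<lambda>j. n * c j"]) (simp add: sum_distrib_left algebra_simps)
qed

lemma laurent_span_zero: "0 \<in> laurent_span s T"
  unfolding laurent_span_def by (intro CollectI exI[of _ "\<lambda>_. 0"]) simp

lemma laurent_span_sum: "(\<And>x. x \<in> A \<Longrightarrow> f x \<in> laurent_span s T) \<Longrightarrow> sum f A \<in> laurent_span s T"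
  by (induction A rule: infinite_finite_induct) (auto simp: laurent_span_zero laurent_span_add)

lemma powi_in_laurent_span:
  assumes "- int s \<le> k" "k \<le> int (Suc T) - int s"
  shows "u powi k \<in> laurent_span s T"
proof -
  define j0 where "j0 = nat (k + int s)"
  have j0: "j0 \<le> Suc T" "k = - int s + int j0" using assms unfolding j0_def by auto
  have "(\<Sum>j\<le>Suc T. of_int (if j = j0 then 1 else 0) * u ^ j) = (\<Sum>j\<le>Suc T. if j = j0 then u ^ j else 0)"
    by (intro sum.cong) auto
  also have "\<dots> = u ^ j0" using j0(1) by (subst sum.delta) auto
  finally have "(\<Sum>j\<le>Suc T. of_int (if j = j0 then 1 else 0) * u ^ j) = u ^ j0" .
  moreover have "u powi (- int s) * u ^ j0 = u powi k"
    unfolding j0(2) using power_int_add[OF disjI1[OF u_nonzero], of "- int s" "int j0"] by simp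
  ultimately show ?thesis unfolding laurent_span_def
    by (intro CollectI exI[of _ "\<lambda>j. if j = j0 then 1 else 0"]) simp
qed

lemma int_in_laurent_span: "of_int n \<in> laurent_span s (s + T)"
  using laurent_span_mult_int[OF powi_in_laurent_span[of s 0 "s + T"], of n] by simp

lemma val_in_laurent_span: "val_u u (digit_word m n a) \<in> laurent_span m (m + n)"
proof -
  have "val_u u (digit_word m n a) = (\<Sum>k\<in>{- int m..int n}. of_int (a k) * u powi k)"
    by (rule val_u_digit_word)
  also have "\<dots> \<in> laurent_span m (m + n)"
    by (intro laurent_span_sum laurent_span_mult_int powi_in_laurent_span) auto
  finally show ?thesis .
qed

definition letter_form :: "nat \<Rightarrow> (nat \<Rightarrow> real) \<Rightarrow> letter \<Rightarrow> real" where
  "letter_form r lam c = (if letter_ok r E c then (\<Sum>i<r. lam i * of_int (letter_digit i c)) else 0)"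

lemma letter_form_in:
  "letter_form r lam c \<in> insert 0 ((\<lambda>ds. \<Sum>i<r. lam i * of_int (ds i)) ` PiE {..<r} (\<lambda>_. {-E..E}))"
proof (cases "letter_ok r E c")
  case True
  have "restrict (\<lambda>i. letter_digit i c) {..<r} \<in> PiE {..<r} (\<lambda>_. {-E..E})"
  proof (rule PiE_I)
    fix i assume "i \<in> {..<r}"
    then show "restrict (\<lambda>i. letter_digit i c) {..<r} i \<in> {-E..E}"
      using letter_ok_digit_bound[OF True, of i] by (simp add: abs_less_iff)
  qed simp
  moreover have "letter_form r lam c = (\<Sum>i<r. lam i * of_int (restrict (\<lambda>i. letter_digit i c) {..<r} i))"
    using True unfolding letter_form_def by simp
  ultimately show ?thesis by blast
qed (simp add: letter_form_def)

lemma finite_range_letter_form: "finite (range (letter_form r lam))"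
  by (rule finite_subset[OF _ finite_insert[THEN iffD2, OF finite_imageI[OF finite_PiE]]])
    (use letter_form_in in auto)

lemma range_letter_form_subset:
  assumes "\<forall>ds::nat \<Rightarrow> int. (\<forall>i<r. \<bar>ds i\<bar> < E) \<longrightarrow> (\<Sum>i<r. lam i * of_int (ds i)) \<in> laurent_span s T"
  shows "range (letter_form r lam) \<subseteq> laurent_span s T"
  using assms letter_ok_digit_bound laurent_span_zero unfolding letter_form_def by auto

lemma horner_list_letter_form_enc_conv:
  assumes ws: "length ws = r" "set ws \<subseteq> digit_words E" and r: "r \<ge> 1"
  shows "horner_list u (letter_form r lam) (enc (conv ws)) =
    u powi (- wlo (conv ws)) * (\<Sum>i<r. lam i * val_u u (ws ! i))"
proof -
  have "horner_list u (letter_form r lam) (enc (conv ws)) =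
      horner_list u (\<lambda>c. \<Sum>i<r. lam i * of_int (letter_digit i c)) (enc (conv ws))"
    using well_formed_enc_conv[OF ws r] unfolding well_formed_def letter_form_def
    by (intro horner_list_cong) auto
  also have "\<dots> = (\<Sum>i<r. lam i * horner_list u (\<lambda>c. of_int (letter_digit i c)) (enc (conv ws)))"
    by (simp add: horner_list_sum horner_list_mult)
  also have "\<dots> = u powi (- wlo (conv ws)) * (\<Sum>i<r. lam i * val_u u (ws ! i))"
    using horner_list_enc_conv[OF ws r _ u_nonzero] by (simp add: sum_distrib_left algebra_simps)
  finally show ?thesis .
qed

lemma carry_run_positive:
  assumes "\<forall>c. \<bar>g c\<bar> \<le> (u - 1) * B" "0 \<le> B"
  shows "foldl (carry_step B g) (Inl 0) xs \<in> {q. case q of Inl P \<Rightarrow> P > 0 | Inr b \<Rightarrow> b}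
    \<longleftrightarrow> horner_list u g xs > 0"
  using carry_run[OF assms, of xs] assms(2)
  by (cases "foldl (carry_step B g) (Inl 0) xs") (auto split: if_splits)

lemma carry_run_zero:
  assumes "\<forall>c. \<bar>g c\<bar> \<le> (u - 1) * B" "0 \<le> B"
  shows "foldl (carry_step B g) (Inl 0) xs \<in> {q. case q of Inl P \<Rightarrow> P = 0 | Inr b \<Rightarrow> False}
    \<longleftrightarrow> horner_list u g xs = 0"
  using carry_run[OF assms, of xs] assms(2)
  by (cases "foldl (carry_step B g) (Inl 0) xs") (auto split: if_splits)

lemma automatic_relation_linear_form:
  fixes lam :: "nat \<Rightarrow> real" and R :: "real list \<Rightarrow> bool" and strict :: bool
  defines "\<Phi> x \<equiv> if strict then x > 0 else x = (0::real)"
  assumes r: "r \<ge> 1"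
    and span: "\<forall>ds::nat \<Rightarrow> int. (\<forall>i<r. \<bar>ds i\<bar> < E) \<longrightarrow> (\<Sum>i<r. lam i * of_int (ds i)) \<in> laurent_span s T"
    and R: "\<forall>ws. length ws = r \<and> set ws \<subseteq> digit_words E \<longrightarrow>
        (R (map (val_u u) ws) \<longleftrightarrow> \<Phi> (\<Sum>i<r. lam i * val_u u (ws ! i)))"
  shows "automatic_relation (digit_words E) (val_u u) r R"
proof -
  define g where "g = letter_form r lam"
  define B where "B = Max (insert 0 (abs ` range g)) / (u - 1)"
  have fin: "finite (insert 0 (abs ` range g))" using finite_range_letter_form unfolding g_def by simp
  have g: "\<forall>c. \<bar>g c\<bar> \<le> (u - 1) * B" and "0 \<le> B"
    unfolding B_def using u Max_ge[OF fin] by auto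
  define F :: "(real + bool) set" where "F = (if strict then {q. case q of Inl P \<Rightarrow> P > 0 | Inr b \<Rightarrow> b}
                       else {q. case q of Inl P \<Rightarrow> P = 0 | Inr b \<Rightarrow> False})"
  have accept: "foldl (carry_step B g) (Inl 0) xs \<in> F \<longleftrightarrow> \<Phi> (horner_list u g xs)" for xs
    unfolding F_def \<Phi>_def using carry_run_positive[OF g \<open>0 \<le> B\<close>] carry_run_zero[OF g \<open>0 \<le> B\<close>]
    by simp
  have sign_iff: "\<Phi> (horner_list u g (enc (conv ws))) \<longleftrightarrow> R (map (val_u u) ws)"
    if ws: "length ws = r" "set ws \<subseteq> digit_words E" for ws
  proof -
    have "u powi (- wlo (conv ws)) > 0" using u by simp
    then show ?thesis
      using R ws u_nonzero unfolding g_def horner_list_letter_form_enc_conv[OF ws r] \<Phi>_def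
      by (simp add: zero_less_mult_iff)
  qed
  define L where "L = {conv ws | ws. length ws = r \<and> set ws \<subseteq> digit_words E \<and> R (map (val_u u) ws)}"
  have "L = {conv ws | ws. length ws = r \<and> set ws \<subseteq> digit_words E \<and> \<Phi> (horner_list u g (enc (conv ws)))}"
    unfolding L_def using sign_iff by blast
  then have "enc ` L = {xs. well_formed r E xs \<and> \<Phi> (horner_list u g xs)}"
    using enc_conv_image[OF r] by simp
  also have "\<dots> = {xs. foldl (shape_step r E) (True, 0, replicate r 0) xs \<in> shape_accepting \<and>
      foldl (carry_step B g) (Inl 0) xs \<in> F}"
    using accept by (simp add: well_formed_iff_shape_step)
  finally have enc_L: "enc ` L = \<dots>" .
  have "finite {foldl (carry_step B g) (Inl 0) xs | xs. True}"
    unfolding g_def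
    by (rule finite_carry_states[OF \<open>0 \<le> B\<close> finite_range_letter_form
          range_letter_form_subset[OF span] g[unfolded g_def]])
  then have "regular_lang (enc ` L)"
    unfolding enc_L by (rule regular_lang_foldl_conj[OF finite_shape_states])
  moreover have "\<forall>w\<in>L. is_word w" unfolding L_def is_word_def using finite_wdom_conv by blast
  ultimately show ?thesis
    unfolding automatic_relation_def regular_words_def L_def[symmetric] by blast
qed

end

context algC_setting
begin

lemma int_form_in_laurent_span:
  "\<forall>ds. (\<forall>i<r. \<bar>ds i\<bar> < E) \<longrightarrow> (\<Sum>i<r. of_int (k i) * of_int (ds i)) \<in> laurent_span 0 0"
  using int_in_laurent_span[of "\<Sum>i<r. k i * ds i" 0 0 for ds] by simp

lemma automatic_add: "automatic_function (digit_words E) (val_u u) 2 (\<lambda>xs. xs ! 0 + xs ! 1)"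
  unfolding automatic_function_def
  by (rule automatic_relation_linear_form[OF _ int_form_in_laurent_span[of _ "\<lambda>i. if i = 2 then -1 else 1"],
        where strict = False])
    (auto simp: numeral_2_eq_2)

lemma automatic_less: "automatic_relation (digit_words E) (val_u u) 2 (\<lambda>xs. xs ! 0 < xs ! 1)"
  by (rule automatic_relation_linear_form[OF _ int_form_in_laurent_span[of _ "\<lambda>i. if i = 0 then -1 else 1"],
        where strict = True])
    (auto simp: numeral_2_eq_2)

lemma automatic_eq: "automatic_relation (digit_words E) (val_u u) 2 (\<lambda>xs. xs ! 0 = xs ! 1)"
  by (rule automatic_relation_linear_form[OF _ int_form_in_laurent_span[of _ "\<lambda>i. if i = 0 then -1 else 1"],
        where strict = False])
    (auto simp: numeral_2_eq_2)

lemma automatic_mult_const: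
  assumes a: "a \<in> digit_words E"
  shows "automatic_function (digit_words E) (val_u u) 1 (\<lambda>xs. val_u u a * xs ! 0)"
    and "automatic_function (digit_words E) (val_u u) 1 (\<lambda>xs. xs ! 0 * val_u u a)"
proof -
  obtain m n d where "a = digit_word m n d" using a digit_words_iff by blast
  then have a_span: "val_u u a \<in> laurent_span m (m + n)" by (simp add: val_in_laurent_span)
  have span: "\<forall>ds::nat \<Rightarrow> int. (\<forall>i<Suc 1. \<bar>ds i\<bar> < E) \<longrightarrow>
      (\<Sum>i<Suc 1. (if i = 0 then - val_u u a else 1) * of_int (ds i)) \<in> laurent_span m (m + n)"
  proof (intro allI impI)
    fix ds :: "nat \<Rightarrow> int"
    have "(\<Sum>i<Suc 1. (if i = 0 then - val_u u a else 1) * of_int (ds i)) =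
        of_int (- ds 0) * val_u u a + of_int (ds 1)"
      by simp
    then show "(\<Sum>i<Suc 1. (if i = 0 then - val_u u a else 1) * of_int (ds i)) \<in> laurent_span m (m + n)"
      using laurent_span_add[OF laurent_span_mult_int[OF a_span] int_in_laurent_span,
          of "- ds 0" "ds 1"] by (simp add: mult.commute)
  qed
  show "automatic_function (digit_words E) (val_u u) 1 (\<lambda>xs. val_u u a * xs ! 0)"
    unfolding automatic_function_def
    by (rule automatic_relation_linear_form[where strict = False, OF _ span]) (auto simp: algebra_simps)
  show "automatic_function (digit_words E) (val_u u) 1 (\<lambda>xs. xs ! 0 * val_u u a)"
    unfolding automatic_function_def
    by (rule automatic_relation_linear_form[where strict = False, OF _ span]) (auto simp: algebra_simps)
qed

lemma semiautomatic_ring_structure_digit_words: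
  "semiautomatic_ring_structure (digit_words E) (val_u u)"
  unfolding semiautomatic_ring_structure_def semiautomatic_binop_def
  using automatic_add automatic_less automatic_eq automatic_mult_const by blast

end

section \<open>The ring of values\<close>

inductive_set laurent_ring :: "real \<Rightarrow> real set" for u :: real where
  monomial: "of_int n * u powi k \<in> laurent_ring u"
| add: "x \<in> laurent_ring u \<Longrightarrow> y \<in> laurent_ring u \<Longrightarrow> x + y \<in> laurent_ring u"

lemma laurent_ring_int: "of_int n \<in> laurent_ring u"
  using laurent_ring.monomial[of n u 0] by simp

lemma laurent_ring_uminus: "x \<in> laurent_ring u \<Longrightarrow> - x \<in> laurent_ring u"
proof (induction rule: laurent_ring.induct)
  case (monomial n k)
  then show ?case using laurent_ring.monomial[of "- n" u k] by simp
next
  case (add x y)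
  then show ?case using laurent_ring.add[of "- x" u "- y"] by simp
qed

lemma laurent_ring_mult:
  assumes "u \<noteq> 0" and x: "x \<in> laurent_ring u" and y: "y \<in> laurent_ring u"
  shows "x * y \<in> laurent_ring u"
  using x
proof (induction rule: laurent_ring.induct)
  case (monomial n k)
  from y show ?case
  proof (induction rule: laurent_ring.induct)
    case (monomial m j)
    have "of_int n * u powi k * (of_int m * u powi j) = of_int (n * m) * u powi (k + j)"
      using power_int_add[of u k j] \<open>u \<noteq> 0\<close> by (simp add: algebra_simps)
    then show ?case by (metis laurent_ring.monomial)
  next
    case (add x y)
    then show ?case by (simp add: distrib_left laurent_ring.add)
  qed
next
  case (add x1 x2)
  then show ?case by (simp add: distrib_right laurent_ring.add)
qed

lemma laurent_ring_sum: "(\<And>x. x \<in> A \<Longrightarrow> f x \<in> laurent_ring u) \<Longrightarrow> sum f A \<in> laurent_ring u"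
  by (induction A rule: infinite_finite_induct)
    (auto simp: laurent_ring.add laurent_ring_int[of 0, simplified])

lemma laurent_ring_power: "u \<noteq> 0 \<Longrightarrow> x \<in> laurent_ring u \<Longrightarrow> x ^ k \<in> laurent_ring u"
  by (induction k) (auto simp: laurent_ring_int[of 1, simplified] laurent_ring_mult)

lemma lp_eval_in_laurent_ring: "lp_eval p u \<in> laurent_ring u"
  unfolding lp_eval_def by (rule laurent_ring_sum) (rule laurent_ring.monomial)

lemma real_subring_laurent_ring: "u \<noteq> 0 \<Longrightarrow> real_subring (laurent_ring u)"
  unfolding real_subring_def
  using laurent_ring_int[of 1] laurent_ring_uminus laurent_ring.add laurent_ring_mult by auto

lemma val_u_in_laurent_ring: "w \<in> digit_words E \<Longrightarrow> val_u u w \<in> laurent_ring u"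
  unfolding val_u_def by (intro laurent_ring_sum laurent_ring.monomial)

lemma laurent_ring_imp_finite_sum:
  assumes "x \<in> laurent_ring u"
  obtains c K where "finite K" "\<forall>k. k \<notin> K \<longrightarrow> c k = 0" "x = (\<Sum>k\<in>K. of_int (c k) * u powi k)"
proof -
  from assms have "\<exists>c K. finite K \<and> (\<forall>k. k \<notin> K \<longrightarrow> c k = 0) \<and> x = (\<Sum>k\<in>K. of_int (c k) * u powi k)"
  proof (induction rule: laurent_ring.induct)
    case (monomial n k)
    show ?case by (intro exI[of _ "\<lambda>j. if j = k then n else 0"] exI[of _ "{k}"]) auto
  next
    case (add x y)
    then obtain c K c' K' where c: "finite K" "\<forall>k. k \<notin> K \<longrightarrow> c k = 0" "x = (\<Sum>k\<in>K. of_int (c k) * u powi k)"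
      and c': "finite K'" "\<forall>k. k \<notin> K' \<longrightarrow> c' k = 0" "y = (\<Sum>k\<in>K'. of_int (c' k) * u powi k)"
      by blast
    have "x = (\<Sum>k\<in>K \<union> K'. of_int (c k) * u powi k)" "y = (\<Sum>k\<in>K \<union> K'. of_int (c' k) * u powi k)"
      unfolding c(3) c'(3) by (rule sum.mono_neutral_left; use c c' in auto)+
    then show ?case
      by (intro exI[of _ "\<lambda>k. c k + c' k"] exI[of _ "K \<union> K'"])
        (use c c' in \<open>auto simp: sum.distrib distrib_right\<close>)
  qed
  then show ?thesis using that by blast
qed

lemma dominant_coeff_pos:
  assumes "p l > (\<Sum>k\<in>{k. p k \<noteq> 0} - {l}. \<bar>p k\<bar>)"
  shows "p l > (0::int)"
proof -
  have "0 \<le> (\<Sum>k\<in>{k. p k \<noteq> 0} - {l}. \<bar>p k\<bar>)" by (intro sum_nonneg) simp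
  then show ?thesis using assms by linarith
qed

lemma shifted_root_sum:
  assumes "u \<noteq> 0" and "lp_eval p u = 0"
    and "finite K" and K: "(\<lambda>i. i + t) ` {k. p k \<noteq> 0} \<subseteq> K"
  shows "(\<Sum>j\<in>K. of_int (p (j - t)) * u powi j) = 0"
proof -
  have "(\<Sum>j\<in>K. of_int (p (j - t)) * u powi j) = (\<Sum>j\<in>(\<lambda>i. i + t) ` {k. p k \<noteq> 0}. of_int (p (j - t)) * u powi j)"
    using K \<open>finite K\<close> by (intro sum.mono_neutral_right) force+
  also have "\<dots> = (\<Sum>i\<in>{k. p k \<noteq> 0}. of_int (p i) * u powi (i + t))"
    by (subst sum.reindex) (auto simp: inj_on_def)
  also have "\<dots> = u powi t * lp_eval p u"
    unfolding lp_eval_def sum_distrib_left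
    using power_int_add[OF disjI1[OF \<open>u \<noteq> 0\<close>]] by (simp add: algebra_simps)
  finally show ?thesis using assms(2) by simp
qed

lemma sum_abs_shifted_remove:
  fixes p :: "int \<Rightarrow> int"
  assumes "finite K" and K: "(\<lambda>i. i + t) ` {k. p k \<noteq> 0} \<subseteq> K"
  shows "(\<Sum>j\<in>K - {l + t}. \<bar>p (j - t)\<bar>) = (\<Sum>k\<in>{k. p k \<noteq> 0} - {l}. \<bar>p k\<bar>)"
proof -
  define P where "P = {k. p k \<noteq> 0}"
  have "(\<Sum>j\<in>K - {l + t}. \<bar>p (j - t)\<bar>) = (\<Sum>j\<in>(\<lambda>i. i + t) ` (P - {l}). \<bar>p (j - t)\<bar>)"
  proof (rule sum.mono_neutral_right)
    show "(\<lambda>i. i + t) ` (P - {l}) \<subseteq> K - {l + t}" using K unfolding P_def by auto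
    show "\<forall>i\<in>K - {l + t} - (\<lambda>i. i + t) ` (P - {l}). \<bar>p (i - t)\<bar> = 0"
    proof
      fix i assume i: "i \<in> K - {l + t} - (\<lambda>i. i + t) ` (P - {l})"
      have "i - t \<notin> P"
      proof
        assume "i - t \<in> P"
        moreover have "i - t \<noteq> l" using i by auto
        ultimately have "i \<in> (\<lambda>i. i + t) ` (P - {l})" using image_eqI[of i "\<lambda>i. i + t" "i - t"] by simp
        then show False using i by blast
      qed
      then show "\<bar>p (i - t)\<bar> = 0" unfolding P_def by simp
    qed
  qed (use \<open>finite K\<close> in simp)
  also have "\<dots> = (\<Sum>i\<in>P - {l}. \<bar>p i\<bar>)" by (subst sum.reindex) (auto simp: inj_on_def)
  finally show ?thesis unfolding P_def .
qed

text \<open>Subtracting \<open>sgn (c k0) * x ^ (k0 - l) * p\<close>, which vanishes at \<open>u\<close>, lowers \<open>\<bar>c k0\<bar>\<close> by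
  \<open>p l\<close> and raises the other coefficients by less than \<open>p l\<close> in total.\<close>

lemma reduce_large_coeff:
  fixes p c :: "int \<Rightarrow> int"
  assumes "u \<noteq> 0" and p: "laurent_poly p" "lp_eval p u = 0"
    and dom: "p l > (\<Sum>k\<in>{k. p k \<noteq> 0} - {l}. \<bar>p k\<bar>)"
    and K: "finite K" "\<forall>k. k \<notin> K \<longrightarrow> c k = 0" and k0: "k0 \<in> K" "\<bar>c k0\<bar> \<ge> p l"
  obtains c' K' where "finite K'" "\<forall>k. k \<notin> K' \<longrightarrow> c' k = 0"
    and "(\<Sum>k\<in>K'. of_int (c' k) * u powi k) = (\<Sum>k\<in>K. of_int (c k) * u powi k)"
    and "(\<Sum>k\<in>K'. \<bar>c' k\<bar>) < (\<Sum>k\<in>K. \<bar>c k\<bar>)"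
proof
  define P where "P = {k. p k \<noteq> 0}"
  define t where "t = k0 - l"
  define c' where "c' j = c j - sgn (c k0) * p (j - t)" for j
  define K' where "K' = K \<union> (\<lambda>i. i + t) ` P"
  have "finite P" using p(1) unfolding laurent_poly_def P_def .
  then show fin: "finite K'" unfolding K'_def using K by simp
  have KK': "K \<subseteq> K'" unfolding K'_def by auto
  have p_out: "p (j - t) = 0" if "j \<notin> (\<lambda>i. i + t) ` P" for j
    using that unfolding P_def by (metis (mono_tags) diff_add_cancel image_eqI mem_Collect_eq)
  show "\<forall>k. k \<notin> K' \<longrightarrow> c' k = 0" unfolding c'_def K'_def using K(2) p_out by auto
  have "(\<Sum>j\<in>K'. of_int (c' j) * u powi j) =
      (\<Sum>j\<in>K'. of_int (c j) * u powi j) - of_int (sgn (c k0)) * (\<Sum>j\<in>K'. of_int (p (j - t)) * u powi j)"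
    unfolding c'_def by (simp add: sum_subtractf sum_distrib_left algebra_simps)
  also have "(\<Sum>j\<in>K'. of_int (p (j - t)) * u powi j) = 0"
    using shifted_root_sum[OF \<open>u \<noteq> 0\<close> p(2) fin] unfolding K'_def P_def by blast
  also have "(\<Sum>j\<in>K'. of_int (c j) * u powi j) = (\<Sum>j\<in>K. of_int (c j) * u powi j)"
    using K by (intro sum.mono_neutral_right[OF fin KK']) auto
  finally show "(\<Sum>k\<in>K'. of_int (c' k) * u powi k) = (\<Sum>k\<in>K. of_int (c k) * u powi k)" by simp
  have "p l > 0" by (rule dominant_coeff_pos[OF dom])
  have c'_k0: "\<bar>c' k0\<bar> = \<bar>c k0\<bar> - p l"
    using k0(2) \<open>p l > 0\<close> unfolding c'_def t_def by (cases "c k0 \<ge> 0") (auto simp: sgn_if)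
  have "(\<Sum>j\<in>K' - {l + t}. \<bar>p (j - t)\<bar>) = (\<Sum>k\<in>P - {l}. \<bar>p k\<bar>)"
    using sum_abs_shifted_remove[OF fin, of t p l] unfolding K'_def P_def by blast
  then have "(\<Sum>j\<in>K' - {k0}. \<bar>p (j - t)\<bar>) < p l" using dom unfolding P_def t_def by simp
  moreover have "(\<Sum>j\<in>K' - {k0}. \<bar>c' j\<bar>) \<le> (\<Sum>j\<in>K' - {k0}. \<bar>c j\<bar> + \<bar>p (j - t)\<bar>)"
    unfolding c'_def by (intro sum_mono) (auto simp: sgn_if abs_mult)
  moreover have "(\<Sum>j\<in>K'. \<bar>c j\<bar>) = (\<Sum>j\<in>K. \<bar>c j\<bar>)"
    using K by (intro sum.mono_neutral_right[OF fin KK']) auto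
  moreover have "k0 \<in> K'" using k0(1) KK' by auto
  ultimately show "(\<Sum>k\<in>K'. \<bar>c' k\<bar>) < (\<Sum>k\<in>K. \<bar>c k\<bar>)"
    using sum.remove[OF fin, of k0 "\<lambda>j. \<bar>c' j\<bar>"] sum.remove[OF fin, of k0 "\<lambda>j. \<bar>c j\<bar>"] c'_k0
    by (simp add: sum.distrib)
qed

lemma finite_sum_in_digit_values:
  fixes p c :: "int \<Rightarrow> int"
  assumes "u \<noteq> 0" and p: "laurent_poly p" "lp_eval p u = 0"
    and dom: "p l > (\<Sum>k\<in>{k. p k \<noteq> 0} - {l}. \<bar>p k\<bar>)"
    and K: "finite K" "\<forall>k. k \<notin> K \<longrightarrow> c k = 0"
  shows "(\<Sum>k\<in>K. of_int (c k) * u powi k) \<in> val_u u ` digit_words (p l)"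
proof -
  have main: "(\<Sum>k\<in>K. of_int (c k) * u powi k) \<in> val_u u ` digit_words (p l)"
    if "nat (\<Sum>k\<in>K. \<bar>c k\<bar>) = N" "finite K" "\<forall>k. k \<notin> K \<longrightarrow> c k = 0" for N c K
    using that
  proof (induction N arbitrary: c K rule: less_induct)
    case (less N c K)
    show ?case
    proof (cases "\<forall>k\<in>K. \<bar>c k\<bar> < p l")
      case True
      have small: "\<forall>k. \<bar>c k\<bar> < p l"
      proof
        fix k
        show "\<bar>c k\<bar> < p l"
          using True less.prems(3) dominant_coeff_pos[OF dom] by (cases "k \<in> K") simp_all
      qed
      define m where "m = nat (- Min (K \<union> {0}))"
      define n where "n = nat (Max (K \<union> {0}))"
      have sub: "K \<subseteq> {- int m..int n}"
      proof
        fix k assume "k \<in> K"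
        then have "Min (K \<union> {0}) \<le> k" "k \<le> Max (K \<union> {0})" using less.prems(2) by auto
        then show "k \<in> {- int m..int n}" unfolding m_def n_def by auto
      qed
      have "val_u u (digit_word m n c) = (\<Sum>k\<in>K. of_int (c k) * u powi k)"
        unfolding val_u_digit_word by (rule sum.mono_neutral_right) (use sub less.prems in auto)
      moreover have "digit_word m n c \<in> digit_words (p l)" unfolding digit_words_iff using small by blast
      ultimately show ?thesis by (metis image_eqI)
    next
      case False
      then obtain k0 where k0: "k0 \<in> K" "\<bar>c k0\<bar> \<ge> p l" by (auto simp: not_less)
      obtain c' K' where K': "finite K'" "\<forall>k. k \<notin> K' \<longrightarrow> c' k = 0"
        and same: "(\<Sum>k\<in>K'. of_int (c' k) * u powi k) = (\<Sum>k\<in>K. of_int (c k) * u powi k)"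
        and smaller: "(\<Sum>k\<in>K'. \<bar>c' k\<bar>) < (\<Sum>k\<in>K. \<bar>c k\<bar>)"
        by (rule reduce_large_coeff[OF \<open>u \<noteq> 0\<close> p dom less.prems(2,3) k0])
      have "nat (\<Sum>k\<in>K'. \<bar>c' k\<bar>) < N"
        using smaller less.prems(1) by (metis abs_ge_zero nat_less_eq_zless sum_nonneg)
      from less.IH[OF this refl K'] show ?thesis unfolding same .
    qed
  qed
  show ?thesis by (rule main[OF refl K])
qed

lemma digit_values_eq_laurent_ring:
  assumes "u \<noteq> 0" and p: "laurent_poly p" "lp_eval p u = 0"
    and dom: "p l > (\<Sum>k\<in>{k. p k \<noteq> 0} - {l}. \<bar>p k\<bar>)"
  shows "val_u u ` digit_words (p l) = laurent_ring u"
proof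
  show "val_u u ` digit_words (p l) \<subseteq> laurent_ring u" using val_u_in_laurent_ring by blast
  show "laurent_ring u \<subseteq> val_u u ` digit_words (p l)"
  proof
    fix x assume "x \<in> laurent_ring u"
    then obtain c K where "finite K" "\<forall>k. k \<notin> K \<longrightarrow> c k = 0" "x = (\<Sum>k\<in>K. of_int (c k) * u powi k)"
      by (rule laurent_ring_imp_finite_sum)
    then show "x \<in> val_u u ` digit_words (p l)"
      using finite_sum_in_digit_values[OF \<open>u \<noteq> 0\<close> p dom] by simp
  qed
qed

lemma root_le_sum_abs_lower_coeffs:
  fixes p :: "int \<Rightarrow> int" and u :: real
  assumes u: "u > 1" and p: "laurent_poly p" "lp_eval p u = 0"
    and N: "N \<in> {k. p k \<noteq> 0}" "\<forall>k\<in>{k. p k \<noteq> 0}. k \<le> N"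
  shows "u \<le> (\<Sum>k\<in>{k. p k \<noteq> 0} - {N}. of_int \<bar>p k\<bar>)"
proof -
  define P where "P = {k. p k \<noteq> 0}"
  have "finite P" using p(1) unfolding laurent_poly_def P_def .
  have lead: "of_int (p N) * u powi N = - (\<Sum>k\<in>P - {N}. of_int (p k) * u powi k)"
    using sum.remove[OF \<open>finite P\<close> N(1)[folded P_def], of "\<lambda>k. of_int (p k) * u powi k"] p(2)
    unfolding lp_eval_def P_def by simp
  have "u * u powi (N - 1) = u powi N"
    using power_int_add_1'[of u "N - 1"] u by simp
  also have "\<dots> \<le> \<bar>of_int (p N) * u powi N\<bar>"
  proof -
    have "\<bar>p N\<bar> \<ge> 1" using N(1) by simp
    then have "(1::real) \<le> \<bar>of_int (p N)\<bar>" by (metis of_int_1_le_iff of_int_abs)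
    then show ?thesis
      using mult_right_mono[of 1 "\<bar>of_int (p N)\<bar>" "u powi N"] u by (simp add: abs_mult)
  qed
  also have "\<dots> \<le> (\<Sum>k\<in>P - {N}. \<bar>of_int (p k) * u powi k\<bar>)"
    unfolding lead abs_minus_cancel by (rule sum_abs)
  also have "\<dots> \<le> (\<Sum>k\<in>P - {N}. of_int \<bar>p k\<bar> * u powi (N - 1))"
  proof (rule sum_mono)
    fix k assume "k \<in> P - {N}"
    then have "k \<le> N - 1" using N(2) unfolding P_def by force
    then have "u powi k \<le> u powi (N - 1)" using u by (intro power_int_increasing) auto
    then show "\<bar>of_int (p k) * u powi k\<bar> \<le> of_int \<bar>p k\<bar> * u powi (N - 1)"
      using u by (simp add: abs_mult mult_left_mono)
  qed
  finally have "u * u powi (N - 1) \<le> (\<Sum>k\<in>P - {N}. of_int \<bar>p k\<bar>) * u powi (N - 1)"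
    by (simp add: sum_distrib_right)
  moreover have "u powi (N - 1) > 0" using u by simp
  ultimately show ?thesis unfolding P_def by simp
qed

lemma dominant_coeff_bound:
  fixes p :: "int \<Rightarrow> int" and u :: real
  assumes u: "u > 1" and p: "laurent_poly p" "lp_eval p u = 0"
    and dom: "p l > (\<Sum>k\<in>{k. p k \<noteq> 0} - {l}. \<bar>p k\<bar>)"
  shows "u + 1 < 3 * of_int (p l)"
proof -
  define P where "P = {k. p k \<noteq> 0}"
  have "finite P" using p(1) unfolding laurent_poly_def P_def .
  have "l \<in> P" using dominant_coeff_pos[OF dom] unfolding P_def by simp
  define N where "N = Max P"
  have N: "N \<in> P" "\<forall>k\<in>P. k \<le> N"
    unfolding N_def using \<open>finite P\<close> \<open>l \<in> P\<close> by (auto intro: Max_in)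
  have "(\<Sum>k\<in>P. \<bar>p k\<bar>) = p l + (\<Sum>k\<in>P - {l}. \<bar>p k\<bar>)"
    using sum.remove[OF \<open>finite P\<close> \<open>l \<in> P\<close>, of "\<lambda>k. \<bar>p k\<bar>"] dominant_coeff_pos[OF dom] by simp
  moreover have "(\<Sum>k\<in>P. \<bar>p k\<bar>) = \<bar>p N\<bar> + (\<Sum>k\<in>P - {N}. \<bar>p k\<bar>)"
    using sum.remove[OF \<open>finite P\<close> N(1)] by simp
  moreover have "\<bar>p N\<bar> \<ge> 1" using N(1) unfolding P_def by simp
  ultimately have "(\<Sum>k\<in>P - {N}. \<bar>p k\<bar>) \<le> 2 * p l - 2" using dom unfolding P_def by linarith
  then have "(\<Sum>k\<in>P - {N}. of_int \<bar>p k\<bar>) \<le> 2 * of_int (p l) - (2::real)"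
    by (metis of_int_diff of_int_le_iff of_int_mult of_int_numeral of_int_sum)
  moreover have "u \<le> (\<Sum>k\<in>P - {N}. of_int \<bar>p k\<bar>)"
    using root_le_sum_abs_lower_coeffs[OF u p] N unfolding P_def by blast
  ultimately show ?thesis using dominant_coeff_pos[OF dom] by linarith
qed

lemma Dyadic_subset_laurent_ring:
  assumes b: "b \<ge> 2" and "u \<noteq> 0" and inv_b: "1 / of_int b \<in> laurent_ring u"
  shows "Dyadic b \<subseteq> laurent_ring u"
proof
  fix x assume "x \<in> Dyadic b"
  then obtain n m where x: "x = of_int n / (of_int b) powi m" unfolding Dyadic_def by auto
  show "x \<in> laurent_ring u"
  proof (cases "m \<ge> 0")
    case True
    then have "x = of_int n * (1 / of_int b) ^ nat m"
      unfolding x by (simp add: power_int_def power_one_over)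
    then show ?thesis
      using laurent_ring_mult[OF \<open>u \<noteq> 0\<close> laurent_ring_int laurent_ring_power[OF \<open>u \<noteq> 0\<close> inv_b]] by simp
  next
    case False
    then have "x = of_int (n * b ^ nat (- m))"
      unfolding x using b by (simp add: power_int_def field_simps)
    then show ?thesis by (simp only: laurent_ring_int)
  qed
qed

lemma Dyadic_dense:
  assumes b: "b \<ge> 2" and xy: "(x::real) < y"
  shows "\<exists>z\<in>Dyadic b. x < z \<and> z < y"
proof -
  define B where "B = (of_int b :: real)"
  have B: "B > 1" using b unfolding B_def by simp
  obtain k where k: "1 / (y - x) < B ^ k" using real_arch_pow[OF B] by blast
  have Bk: "B ^ k > 0" using B by simp
  define n where "n = \<lfloor>x * B ^ k\<rfloor> + 1"
  define z where "z = of_int n / B ^ k"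
  have "z \<in> Dyadic b" unfolding z_def Dyadic_def B_def
    by (intro CollectI exI[of _ n] exI[of _ "int k"]) simp
  moreover have "x < z"
    using Bk unfolding z_def n_def by (simp add: field_simps) linarith
  moreover have "z < y"
  proof -
    have "of_int n \<le> x * B ^ k + 1" unfolding n_def by linarith
    then have "z \<le> x + 1 / B ^ k" unfolding z_def using Bk B by (simp add: field_simps)
    moreover have "1 / B ^ k < y - x"
    proof -
      have "1 < B ^ k * (y - x)" using k xy by (simp add: divide_less_eq)
      then show ?thesis using Bk by (simp add: divide_less_eq mult.commute)
    qed
    ultimately show ?thesis by linarith
  qed
  ultimately show ?thesis by blast
qed

theorem theorem2p1:
  fixes b :: int and c u chat :: real and h l :: int
    and p1 p2 p3 p4 :: "int \<Rightarrow> int"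
  assumes b: "b \<ge> 2"
    and c_root: "\<exists>j::nat. j \<ge> 1 \<and> c ^ j \<in> \<int>"
    and u: "u > 1"
    and h: "h \<ge> 1"
    and lp: "laurent_poly p1" "laurent_poly p2" "laurent_poly p3" "laurent_poly p4"
    and p1: "lp_eval p1 u = 1 / of_int b"
    and p2: "lp_eval p2 u = c"
    and p3_supp: "\<forall>k. (k < - h + 1 \<or> 0 < k) \<longrightarrow> p3 k = 0"
    and p3_0: "p3 0 = 1"
    and p3: "lp_eval p3 u = 0"
    and p4: "lp_eval p4 u = 0"
    and p4_dom: "p4 l > (\<Sum>k\<in>{k. p4 k \<noteq> 0} - {l}. \<bar>p4 k\<bar>)"
    and chat: "chat > 3 * of_int \<bar>p4 l\<bar>"
    and algC: "algC_condition p3 h chat u \<bar>p4 l\<bar>"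
  shows "Dyadic_ext b c \<subseteq> val_u u ` digit_words \<bar>p4 l\<bar> \<and>
         semiautomatic_ring_structure (digit_words \<bar>p4 l\<bar>) (val_u u) \<and>
         dense_in_reals (val_u u ` digit_words \<bar>p4 l\<bar>) \<and>
         semiautomatic_grid (digit_words \<bar>p4 l\<bar>) (val_u u)"
proof -
  have "u \<noteq> 0" using u by simp
  have E: "\<bar>p4 l\<bar> = p4 l" using dominant_coeff_pos[OF p4_dom] by simp
  interpret algC_setting u chat h "\<bar>p4 l\<bar>" p3
    using u h p3_supp p3_0 p3 algC dominant_coeff_bound[OF u lp(4) p4 p4_dom]
    by unfold_locales (simp_all add: E)
  have digit_values: "val_u u ` digit_words \<bar>p4 l\<bar> = laurent_ring u"
    unfolding E by (rule digit_values_eq_laurent_ring[OF \<open>u \<noteq> 0\<close> lp(4) p4 p4_dom])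
  have ring: "real_subring (laurent_ring u)" by (rule real_subring_laurent_ring[OF \<open>u \<noteq> 0\<close>])
  have Dyadic: "Dyadic b \<subseteq> laurent_ring u"
    using Dyadic_subset_laurent_ring[OF b \<open>u \<noteq> 0\<close>] lp_eval_in_laurent_ring[of p1 u] p1 by simp
  have "Dyadic_ext b c \<subseteq> laurent_ring u"
    unfolding Dyadic_ext_def using ring Dyadic lp_eval_in_laurent_ring[of p2 u] p2
    by (intro Inter_lower) simp
  moreover have "dense_in_reals (laurent_ring u)"
    unfolding dense_in_reals_def using Dyadic_dense[OF b] Dyadic by blast
  ultimately show ?thesis
    unfolding semiautomatic_grid_def digit_values
    using semiautomatic_ring_structure_digit_words ring by blast
qed

end
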